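(* Suppose $\alpha>0$, $L>L_f$, and that $\nabla f$ is completely continuous from $L^2(\Omega)$ to $L^2(\Omega)$ (weakly convergent sequences are mapped to strongly convergent ones). Let $(u_k)$ be generated by the IHT method with parameter $L$ and let $u_{k_n}\rightharpoonup u^*$ weakly in $L^2(\Omega)$ for some subsequence. Then $u_{k_n}\to u^*$ strongly in $L^q(\Omega)$ for all $q\in[1,2)$, and $u^*$ satisfies $$u^*(x)\in H_{\frac{\beta}{L+\alpha},b}\Big(\frac{1}{L+\alpha}\big(Lu^*(x)-\nabla f(u^* )(x)\big)\Big)\quad\text{for a.a. }x\in\Omega.$$
   Context: Let $\Omega\subset\mathbb R^n$ be a bounded open set with Lebesgue measure. Fix $\alpha\ge0$, $\beta>0$, $b\in(0,+\infty]$ and set $U_{ad}:=\{v\in L^2(\Omega): |v(x)|\le b\text{ a.e. in }\Omega\}$. For $t\in\mathbb R$ let $|t|_0:=0$ if $t=0$ and $|t|_0:=1$ if $t\ne0$; for measurable $u$ let $\|u\|_0:=\operatorname{meas}\{x\in\Omega:u(x)\ne0\}$. Define $g(u):=\frac\alpha2\|u\|_{L^2(\Omega)}^2+\beta\|u\|_0$. The function $f:L^2(\Omega)\to\mathbb R$ is weakly lower semicontinuous, bounded from below and Fréchet differentiable; $\nabla f(u)\in L^2(\Omega)$ is the Riesz representative of its derivative, and $\nabla f$ is Lipschitz continuous on $L^2(\Omega)$ with constant $L_f$. IHT method: given $L>0$ and $u_0\in U_{ad}$, for $k=0,1,\dots$ let $u_{k+1}$ be a global solution of $\min_{u\in U_{ad}}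 f(u_k)+\int_\Omega\nabla f(u_k)(u-u_k)\,dx+\frac L2\|u-u_k\|_{L^2(\Omega)}^2+g(u)$ (a solution exists). For $s\ge0$ and $p\in\mathbb R$, $H_{s,b}(p)$ is the set of all $u\in\mathbb R$ satisfying one of: (i) $u=-b$ and $p\le-\max(b,b/2+s/b)$; (ii) $u=b$ and $p\ge\max(b,b/2+s/b)$; (iii) $u=p$ and $\sqrt{2s}\le|p|\le b$; (iv) $u=0$, $b\le\sqrt{2s}$ and $|p|\le b/2+s/b$; (v) $u=0$, $b\ge\sqrt{2s}$ and $|p|\le\sqrt{2s}$ (conditions (i),(ii),(iv) void if $b=+\infty$). *)

theory Defs
  imports "HOL-Analysis.Analysis"
begin

text \<open>The measure space: Lebesgue measure restricted to \<Omega>.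
  Elements of L^2(\<Omega>) are represented by functions; only their values on \<Omega> matter
  (and only up to a.e. equality).\<close>

definition L2 :: "'a::euclidean_space set \<Rightarrow> ('a \<Rightarrow> real) set" where
  "L2 \<Omega> = {u. u \<in> borel_measurable (lebesgue_on \<Omega>) \<and>
                 integrable (lebesgue_on \<Omega>) (\<lambda>x. (u x)\<^sup>2)}"

definition L2inner :: "'a::euclidean_space set \<Rightarrow> ('a \<Rightarrow> real) \<Rightarrow> ('a \<Rightarrow> real) \<Rightarrow> real" where
  "L2inner \<Omega> u v = (\<integral>x. u x * v x \<partial>lebesgue_on \<Omega>)"

definition L2norm :: "'a::euclidean_space set \<Rightarrow> ('a \<Rightarrow> real) \<Rightarrow> real" where
  "L2norm \<Omega> u = sqrt (\<integral>x. (u x)\<^sup>2 \<partial>lebesgue_on \<Omega>)"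

definition L0norm :: "'a::euclidean_space set \<Rightarrow> ('a \<Rightarrow> real) \<Rightarrow> real" where
  "L0norm \<Omega> u = measure (lebesgue_on \<Omega>) {x \<in> \<Omega>. u x \<noteq> 0}"

definition weak_conv_L2 :: "'a::euclidean_space set \<Rightarrow> (nat \<Rightarrow> 'a \<Rightarrow> real) \<Rightarrow> ('a \<Rightarrow> real) \<Rightarrow> bool" where
  "weak_conv_L2 \<Omega> w w0 \<longleftrightarrow>
     (\<forall>z \<in> L2 \<Omega>. (\<lambda>n. L2inner \<Omega> (w n) z) \<longlonglongrightarrow> L2inner \<Omega> w0 z)"

definition Uad :: "'a::euclidean_space set \<Rightarrow> ereal \<Rightarrow> ('a \<Rightarrow> real) set" where
  "Uad \<Omega> b = {v \<in> L2 \<Omega>. AE x in lebesgue_on \<Omega>. ereal \<bar>v x\<bar> \<le> b}"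

definition gfun :: "'a::euclidean_space set \<Rightarrow> real \<Rightarrow> real \<Rightarrow> ('a \<Rightarrow> real) \<Rightarrow> real" where
  "gfun \<Omega> \<alpha> \<beta> u = \<alpha> / 2 * (L2norm \<Omega> u)\<^sup>2 + \<beta> * L0norm \<Omega> u"

definition Hsb :: "real \<Rightarrow> ereal \<Rightarrow> real \<Rightarrow> real set" where
  "Hsb s b p = {u.
     (b \<noteq> \<infinity> \<and> u = - real_of_ereal b \<and>
        p \<le> - max (real_of_ereal b) (real_of_ereal b / 2 + s / real_of_ereal b)) \<or>
     (b \<noteq> \<infinity> \<and> u = real_of_ereal b \<and>
        p \<ge> max (real_of_ereal b) (real_of_ereal b / 2 + s / real_of_ereal b)) \<or>
     (u = p \<and> sqrt (2 * s) \<le> \<bar>p\<bar> \<and> ereal \<bar>p\<bar> \<le> b) \<or>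
     (b \<noteq> \<infinity> \<and> u = 0 \<and> b \<le> ereal (sqrt (2 * s)) \<and>
        \<bar>p\<bar> \<le> real_of_ereal b / 2 + s / real_of_ereal b) \<or>
     (u = 0 \<and> ereal (sqrt (2 * s)) \<le> b \<and> \<bar>p\<bar> \<le> sqrt (2 * s))}"

definition iht_model ::
  "'a::euclidean_space set \<Rightarrow> (('a \<Rightarrow> real) \<Rightarrow> real) \<Rightarrow> (('a \<Rightarrow> real) \<Rightarrow> ('a \<Rightarrow> real))
   \<Rightarrow> real \<Rightarrow> real \<Rightarrow> real \<Rightarrow> ('a \<Rightarrow> real) \<Rightarrow> ('a \<Rightarrow> real) \<Rightarrow> real" where
  "iht_model \<Omega> f gradf L \<alpha> \<beta> uk u =
     f uk + L2inner \<Omega> (gradf uk) (\<lambda>x. u x - uk x)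
     + L / 2 * (L2norm \<Omega> (\<lambda>x. u x - uk x))\<^sup>2 + gfun \<Omega> \<alpha> \<beta> u"

definition iht_sequence ::
  "'a::euclidean_space set \<Rightarrow> (('a \<Rightarrow> real) \<Rightarrow> real) \<Rightarrow> (('a \<Rightarrow> real) \<Rightarrow> ('a \<Rightarrow> real))
   \<Rightarrow> real \<Rightarrow> real \<Rightarrow> ereal \<Rightarrow> real \<Rightarrow> (nat \<Rightarrow> 'a \<Rightarrow> real) \<Rightarrow> bool" where
  "iht_sequence \<Omega> f gradf \<alpha> \<beta> b L u \<longleftrightarrow>
     u 0 \<in> Uad \<Omega> b \<and>
     (\<forall>k. u (Suc k) \<in> Uad \<Omega> b \<and>
          (\<forall>v \<in> Uad \<Omega> b. iht_model \<Omega> f gradf L \<alpha> \<beta> (u k) (u (Suc k))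
                           \<le> iht_model \<Omega> f gradf L \<alpha> \<beta> (u k) v))"

end

(*
  The IHT subproblem decouples pointwise: completing the square shows that u_{k+1}(x) minimises
  the scalar cost (c - p)^2/2 + s |c|_0 over |c| <= b, with s = beta/(L+alpha) and
  p = (L u_k(x) - grad f(u_k)(x))/(L+alpha), and every such minimiser lies in H_{s,b}(p).
  The descent lemma and L > L_f give sum_k ||u_{k+1} - u_k||^2 < infinity; complete continuity
  of grad f allows a further subsequence with sum_n ||grad f(u_{k_n}) - grad f(ustar)||^2 < infinity.
  Hence both differences tend to zero almost everywhere and are dominated by L^2 functions.
  Nonzero scalar minimisers are bounded away from zero, so at almost every x the support of the
  iterates eventually stabilises and u_{k_n}(x) converges to a minimiser of the limiting scalar
  problem.  Being dominated in L^2, the pointwise limit coincides with the weak limit ustar, and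
  dominated convergence gives convergence in L^q for q < 2.  As every subsequence of (u_{k_n})
  has such a further subsequence, the whole of it converges in L^q.
*)
theory Submission
  imports Defs
begin

section \<open>Sequences\<close>

lemma eventually_zero_pattern_constant:
  fixes V :: "nat \<Rightarrow> real"
  assumes \<delta>: "\<delta> > 0" and gap: "\<And>k. V k \<noteq> 0 \<Longrightarrow> \<delta> \<le> \<bar>V k\<bar>"
    and steps: "(\<lambda>k. V (Suc k) - V k) \<longlonglongrightarrow> 0"
  obtains K where "\<And>k. K \<le> k \<Longrightarrow> V k = 0 \<longleftrightarrow> V K = 0"
proof -
  obtain K where K: "\<And>k. K \<le> k \<Longrightarrow> \<bar>V (Suc k) - V k\<bar> < \<delta>"
    using steps \<delta> unfolding LIMSEQ_def dist_real_def by fastforce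
  have next_zero: "V (Suc k) = 0 \<longleftrightarrow> V k = 0" if "K \<le> k" for k
    using K[OF that] gap[of k] gap[of "Suc k"] by force
  have "V k = 0 \<longleftrightarrow> V K = 0" if "K \<le> k" for k
    using that by (induction k rule: dec_induct) (auto simp: next_zero)
  then show ?thesis using that by blast
qed

lemma summable_if_sufficient_decrease:
  fixes F a :: "nat \<Rightarrow> real"
  assumes decrease: "\<And>k. F (Suc k) + c * a k \<le> F k" and c: "c > 0"
    and nonneg: "\<And>k. 0 \<le> a k" and bounded: "\<And>k. m \<le> F k"
  shows "summable a"
proof (rule summableI_nonneg_bounded[OF nonneg])
  fix n
  have "F n + c * (\<Sum>k<n. a k) \<le> F 0"
  proof (induction n)
    case (Suc n)
    then show ?case using decrease[of n] by (simp add: algebra_simps)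
  qed simp
  then have "c * (\<Sum>k<n. a k) \<le> F 0 - m" using bounded[of n] by linarith
  then show "(\<Sum>k<n. a k) \<le> (F 0 - m) / c" using c by (simp add: pos_le_divide_eq mult.commute)
qed

lemma tendsto_0_imp_summable_subseq:
  fixes X :: "nat \<Rightarrow> real"
  assumes "X \<longlonglongrightarrow> 0"
  obtains r where "strict_mono r" "summable (\<lambda>j. \<bar>X (r j)\<bar>)"
proof -
  have "\<exists>N. \<forall>n\<ge>N. \<bar>X n\<bar> \<le> (1/2)^j" for j :: nat
  proof -
    have "eventually (\<lambda>n. dist (X n) 0 < (1/2)^j) sequentially"
      using assms[unfolded tendsto_iff] by simp
    then obtain N where "\<forall>n\<ge>N. \<bar>X n\<bar> < (1/2)^j"
      unfolding eventually_sequentially by (auto simp: dist_real_def)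
    then show ?thesis by (auto intro: less_imp_le)
  qed
  then obtain N where N: "\<And>j n. n \<ge> N j \<Longrightarrow> \<bar>X n\<bar> \<le> (1/2)^j" by metis
  define r where "r j = j + (\<Sum>i\<le>j. N i)" for j
  have "strict_mono r" unfolding strict_mono_Suc_iff r_def by simp
  moreover have "\<bar>X (r j)\<bar> \<le> (1/2)^j" for j
    using member_le_sum[of j "{..j}" N] by (intro N) (simp add: r_def)
  then have "summable (\<lambda>j. \<bar>X (r j)\<bar>)"
    by (intro summable_comparison_test'[OF summable_geometric[of "1/2"]]) auto
  ultimately show ?thesis using that by blast
qed

lemma LIMSEQ_if_subseqs_have_LIMSEQ_subseq:
  fixes a :: "nat \<Rightarrow> 'a::metric_space"
  assumes subseq: "\<And>\<sigma> :: nat \<Rightarrow> nat. strict_mono \<sigma> \<Longrightarrow>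
                      \<exists>\<tau> :: nat \<Rightarrow> nat. strict_mono \<tau> \<and> (\<lambda>j. a (\<sigma> (\<tau> j))) \<longlonglongrightarrow> l"
  shows "a \<longlonglongrightarrow> l"
proof (rule ccontr)
  assume "\<not> a \<longlonglongrightarrow> l"
  then obtain e where e: "e > 0" and far: "\<forall>N. \<exists>n\<ge>N. e \<le> dist (a n) l"
    unfolding LIMSEQ_def by (auto simp: not_less)
  then have "infinite {n. e \<le> dist (a n) l}" by (simp add: infinite_nat_iff_unbounded_le)
  then obtain \<sigma> :: "nat \<Rightarrow> nat"
    where \<sigma>: "strict_mono \<sigma>" and far_\<sigma>: "\<And>j. e \<le> dist (a (\<sigma> j)) l"
    using infinite_enumerate by blast
  obtain \<tau> where "(\<lambda>j. a (\<sigma> (\<tau> j))) \<longlonglongrightarrow> l" using subseq[OF \<sigma>] by blast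
  then obtain j where "dist (a (\<sigma> (\<tau> j))) l < e" using e unfolding LIMSEQ_def by blast
  with far_\<sigma>[of "\<tau> j"] show False by simp
qed

section \<open>The scalar subproblem\<close>

definition scalar_cost :: "real \<Rightarrow> real \<Rightarrow> real \<Rightarrow> real" where
  "scalar_cost s p c = (c - p)\<^sup>2 / 2 + s * (if c = 0 then 0 else 1)"

definition in_box :: "ereal \<Rightarrow> real \<Rightarrow> bool" where
  "in_box b c \<longleftrightarrow> ereal \<bar>c\<bar> \<le> b"

definition box_proj :: "ereal \<Rightarrow> real \<Rightarrow> real" where
  "box_proj b p = (if b = \<infinity> then p else max (- real_of_ereal b) (min (real_of_ereal b) p))"

definition scalar_minimizer :: "real \<Rightarrow> ereal \<Rightarrow> real \<Rightarrow> real \<Rightarrow> bool" where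
  "scalar_minimizer s b p a \<longleftrightarrow>
     in_box b a \<and> (\<forall>c. in_box b c \<longrightarrow> scalar_cost s p a \<le> scalar_cost s p c)"

definition scalar_argmin :: "real \<Rightarrow> ereal \<Rightarrow> real \<Rightarrow> real" where
  "scalar_argmin s b p =
     (if scalar_cost s p 0 \<le> scalar_cost s p (box_proj b p) then 0 else box_proj b p)"

definition support_threshold :: "real \<Rightarrow> ereal \<Rightarrow> real" where
  "support_threshold s b =
     (if b = \<infinity> then sqrt (2 * s) else min (sqrt (2 * s)) (real_of_ereal b))"

lemma ereal_pos_cases:
  assumes "b > 0"
  obtains "b = \<infinity>" | r where "b = ereal r" "r > 0"
  using assms by (cases b) auto

lemma in_box_0: "b > 0 \<Longrightarrow> in_box b 0"
  by (simp add: in_box_def zero_ereal_def[symmetric] less_imp_le)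

lemma in_box_box_proj: "b > 0 \<Longrightarrow> in_box b (box_proj b p)"
  by (erule ereal_pos_cases) (auto simp: in_box_def box_proj_def)

lemma abs_box_proj_le: "b > 0 \<Longrightarrow> \<bar>box_proj b p\<bar> \<le> \<bar>p\<bar>"
  by (erule ereal_pos_cases) (auto simp: box_proj_def)

lemma box_proj_eq_self: "b > 0 \<Longrightarrow> in_box b p \<Longrightarrow> box_proj b p = p"
  by (erule ereal_pos_cases) (auto simp: in_box_def box_proj_def)

lemma box_proj_eq_0_iff: "b > 0 \<Longrightarrow> box_proj b p = 0 \<longleftrightarrow> p = 0"
  by (erule ereal_pos_cases) (auto simp: box_proj_def max_def min_def)

lemma box_proj_nearest:
  assumes "b > 0" "in_box b c"
  shows "\<bar>box_proj b p - p\<bar> \<le> \<bar>c - p\<bar>"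
  using assms by (cases b) (auto simp: in_box_def box_proj_def max_def min_def)

lemma continuous_on_box_proj: "continuous_on UNIV (box_proj b)"
  unfolding box_proj_def by (cases "b = \<infinity>") (auto intro!: continuous_intros)

lemma borel_measurable_box_proj[measurable]: "box_proj b \<in> borel_measurable borel"
  by (rule borel_measurable_continuous_onI[OF continuous_on_box_proj])

lemma sqrt_le_abs_iff: "sqrt x \<le> \<bar>p\<bar> \<longleftrightarrow> x \<le> p\<^sup>2"
  by (metis real_sqrt_abs real_sqrt_le_iff)

lemma endpoint_cost_identity:
  "(r::real) \<noteq> 0 \<Longrightarrow> (r - x)\<^sup>2 / 2 + s - x\<^sup>2 / 2 = r * (r / 2 + s / r - x)"
  by (simp add: field_simps power2_eq_square)

lemma abs_scalar_cost_le: "\<bar>scalar_cost s p c\<bar> \<le> (c - p)\<^sup>2 / 2 + \<bar>s\<bar>"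
  using abs_triangle_ineq[of "(c - p)\<^sup>2 / 2" s] by (simp add: scalar_cost_def)

lemma scalar_minimizer_scalar_argmin:
  assumes "b > 0" "s > 0"
  shows "scalar_minimizer s b p (scalar_argmin s b p)"
  unfolding scalar_minimizer_def
proof (intro conjI allI impI)
  show "in_box b (scalar_argmin s b p)"
    using in_box_box_proj[OF \<open>b > 0\<close>] in_box_0[OF \<open>b > 0\<close>] by (simp add: scalar_argmin_def)
  fix c assume c: "in_box b c"
  have "(box_proj b p - p)\<^sup>2 \<le> (c - p)\<^sup>2"
    using box_proj_nearest[OF \<open>b > 0\<close> c] abs_le_square_iff by blast
  then have "c \<noteq> 0 \<Longrightarrow> scalar_cost s p (box_proj b p) \<le> scalar_cost s p c"
    using \<open>s > 0\<close> by (auto simp: scalar_cost_def)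
  then show "scalar_cost s p (scalar_argmin s b p) \<le> scalar_cost s p c"
    by (cases "c = 0") (auto simp: scalar_argmin_def)
qed

lemma abs_scalar_argmin_le: "b > 0 \<Longrightarrow> \<bar>scalar_argmin s b p\<bar> \<le> \<bar>p\<bar>"
  using abs_box_proj_le[of b p] by (auto simp: scalar_argmin_def)

lemma scalar_minimizer_nonzero:
  assumes b: "b > 0" and s: "s > 0" and a: "scalar_minimizer s b p a" "a \<noteq> 0"
  shows "a = box_proj b p \<and> support_threshold s b \<le> \<bar>a\<bar>"
proof -
  have "scalar_cost s p a \<le> scalar_cost s p 0"
    using a in_box_0[OF b] by (auto simp: scalar_minimizer_def)
  then have cost_le_0: "(a - p)\<^sup>2 / 2 + s \<le> p\<^sup>2 / 2"
    using \<open>a \<noteq> 0\<close> by (simp add: scalar_cost_def)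
  moreover have "0 < a\<^sup>2 / 2 + s" using s by (simp add: add_nonneg_pos)
  ultimately have "p \<noteq> 0" by auto
  then have "box_proj b p \<noteq> 0" using box_proj_eq_0_iff[OF b] by simp
  moreover have "scalar_cost s p a \<le> scalar_cost s p (box_proj b p)"
    using a in_box_box_proj[OF b] by (simp add: scalar_minimizer_def)
  ultimately have "(a - p)\<^sup>2 \<le> (box_proj b p - p)\<^sup>2"
    using \<open>a \<noteq> 0\<close> by (simp add: scalar_cost_def)
  moreover have "\<bar>box_proj b p - p\<bar> \<le> \<bar>a - p\<bar>"
    using a box_proj_nearest[OF b] by (auto simp: scalar_minimizer_def)
  ultimately have dist_eq: "\<bar>a - p\<bar> = \<bar>box_proj b p - p\<bar>"
    by (metis abs_le_square_iff antisym)
  show ?thesis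
  proof (cases "in_box b p")
    case True
    then have "a = p" using dist_eq box_proj_eq_self[OF b] by simp
    then have "sqrt (2 * s) \<le> \<bar>a\<bar>" using cost_le_0 sqrt_le_abs_iff by simp
    then show ?thesis using \<open>a = p\<close> box_proj_eq_self[OF b True]
      by (auto simp: support_threshold_def)
  next
    case False
    then obtain r where r: "b = ereal r" "r > 0" "r < \<bar>p\<bar>"
      using b by (cases b) (auto simp: in_box_def)
    have "\<bar>a\<bar> \<le> r" using a r by (simp add: scalar_minimizer_def in_box_def)
    then have "a = box_proj b p" "\<bar>a\<bar> = r"
      using dist_eq r by (auto simp: box_proj_def split: if_splits)
    then show ?thesis using r by (simp add: support_threshold_def)
  qed
qed

lemma scalar_minimizer_nonzero_in_Hsb:
  assumes b: "b > 0" and s: "s > 0" and a: "scalar_minimizer s b p a" "a \<noteq> 0"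
  shows "a \<in> Hsb s b p"
proof -
  have "scalar_cost s p a \<le> scalar_cost s p 0"
    using a in_box_0[OF b] by (auto simp: scalar_minimizer_def)
  then have cost_le_0: "(a - p)\<^sup>2 / 2 + s \<le> p\<^sup>2 / 2"
    using \<open>a \<noteq> 0\<close> by (simp add: scalar_cost_def)
  have a_proj: "a = box_proj b p" using scalar_minimizer_nonzero[OF b s a] by blast
  show ?thesis
  proof (cases "in_box b p")
    case True
    then have "a = p" using a_proj box_proj_eq_self[OF b] by simp
    then show ?thesis using True cost_le_0 sqrt_le_abs_iff[of "2 * s" p]
      by (auto simp: Hsb_def in_box_def)
  next
    case False
    then obtain r where r: "b = ereal r" "r > 0" "r < \<bar>p\<bar>"
      using b by (cases b) (auto simp: in_box_def)
    show ?thesis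
    proof (cases "p > 0")
      case True
      then have "a = r" using a_proj r by (auto simp: box_proj_def)
      then have "r * (r / 2 + s / r - p) \<le> 0"
        using cost_le_0 endpoint_cost_identity[of r p s] r by simp
      then have "r / 2 + s / r \<le> p" using r by (simp add: mult_le_0_iff)
      then show ?thesis using \<open>a = r\<close> r True by (auto simp: Hsb_def)
    next
      case False
      then have "a = - r" using a_proj r by (auto simp: box_proj_def)
      then have "(a - p)\<^sup>2 = (r - (- p))\<^sup>2" by (simp add: power2_eq_square algebra_simps)
      then have "r * (r / 2 + s / r - (- p)) \<le> 0"
        using cost_le_0 endpoint_cost_identity[of r "- p" s] r unfolding power2_minus by linarith
      then have "r / 2 + s / r \<le> - p" using r by (simp add: mult_le_0_iff)
      then show ?thesis using \<open>a = - r\<close> r False by (auto simp: Hsb_def)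
    qed
  qed
qed

lemma scalar_minimizer_zero_in_Hsb:
  assumes b: "b > 0" and s: "s > 0" and min0: "scalar_minimizer s b p 0"
  shows "0 \<in> Hsb s b p"
proof -
  have cost_ge: "p\<^sup>2 / 2 \<le> (c - p)\<^sup>2 / 2 + s" if "in_box b c" "c \<noteq> 0" for c
    using min0 that by (auto simp: scalar_minimizer_def scalar_cost_def)
  have small_if_feasible: "\<bar>p\<bar> \<le> sqrt (2 * s)" if "in_box b p"
    using cost_ge[OF that] s sqrt_le_abs_iff[of "2 * s" p]
    by (cases "p = 0") (auto simp: real_le_rsqrt)
  show ?thesis
  proof (cases "b = \<infinity>")
    case True
    then show ?thesis using small_if_feasible by (simp add: Hsb_def in_box_def)
  next
    case False
    then obtain r where r: "b = ereal r" "r > 0" using b by (cases b) auto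
    have "\<bar>p\<bar> \<le> r / 2 + s / r"
    proof (cases "p = 0")
      case True then show ?thesis using r s by simp
    next
      case False
      have box: "in_box b (sgn p * r)" using r by (simp add: in_box_def abs_mult)
      have sq: "(sgn p * r - p)\<^sup>2 = (r - \<bar>p\<bar>)\<^sup>2"
        using \<open>p \<noteq> 0\<close> by (cases "p > 0") (auto simp: sgn_if power2_eq_square algebra_simps)
      have "sgn p * r \<noteq> 0" using \<open>p \<noteq> 0\<close> r by (simp add: sgn_zero_iff)
      then have "p\<^sup>2 / 2 \<le> (r - \<bar>p\<bar>)\<^sup>2 / 2 + s" using cost_ge[OF box] sq by simp
      then have "0 \<le> r * (r / 2 + s / r - \<bar>p\<bar>)"
        using endpoint_cost_identity[of r "\<bar>p\<bar>" s] r by simp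
      then show ?thesis using r by (simp add: zero_le_mult_iff)
    qed
    moreover have "\<bar>p\<bar> \<le> sqrt (2 * s)" if "sqrt (2 * s) < r"
    proof (cases "\<bar>p\<bar> \<le> r")
      case True then show ?thesis using small_if_feasible r by (simp add: in_box_def)
    next
      case False
      have "sqrt (2 * s) < sqrt (r\<^sup>2)" using that r by simp
      then have "2 * s < r\<^sup>2" by (simp only: real_sqrt_less_iff)
      then have "r / 2 + s / r < r" using r by (simp add: field_simps power2_eq_square)
      then show ?thesis using \<open>\<bar>p\<bar> \<le> r / 2 + s / r\<close> False by linarith
    qed
    ultimately show ?thesis using r by (auto simp: Hsb_def not_less)
  qed
qed

lemma scalar_minimizer_in_Hsb:
  "b > 0 \<Longrightarrow> s > 0 \<Longrightarrow> scalar_minimizer s b p a \<Longrightarrow> a \<in> Hsb s b p"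
  using scalar_minimizer_nonzero_in_Hsb scalar_minimizer_zero_in_Hsb by blast

lemma scalar_minimizer_closed:
  assumes b: "b > 0" and s: "s > 0"
    and p: "pp \<longlonglongrightarrow> p" and a: "aa \<longlonglongrightarrow> a"
    and min: "\<And>j. scalar_minimizer s b (pp j) (aa j)"
  shows "scalar_minimizer s b p a"
  unfolding scalar_minimizer_def
proof (intro conjI allI impI)
  show "in_box b a"
  proof (cases b)
    case (real r)
    have "\<bar>aa j\<bar> \<le> r" for j using min[of j] real by (simp add: scalar_minimizer_def in_box_def)
    moreover have "(\<lambda>j. \<bar>aa j\<bar>) \<longlonglongrightarrow> \<bar>a\<bar>" by (intro tendsto_intros a)
    ultimately have "\<bar>a\<bar> \<le> r" by (intro LIMSEQ_le_const2) auto
    then show ?thesis using real by (simp add: in_box_def)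
  qed (use b in \<open>auto simp: in_box_def\<close>)
  fix c assume c: "in_box b c"
  have cost_c: "(\<lambda>j. scalar_cost s (pp j) c) \<longlonglongrightarrow> scalar_cost s p c"
    unfolding scalar_cost_def by (auto intro!: tendsto_intros p)
  have dist: "(\<lambda>j. (aa j - pp j)\<^sup>2 / 2) \<longlonglongrightarrow> (a - p)\<^sup>2 / 2"
    by (auto intro!: tendsto_intros a p)
  have le: "scalar_cost s (pp j) (aa j) \<le> scalar_cost s (pp j) c" for j
    using min[of j] c by (simp add: scalar_minimizer_def)
  show "scalar_cost s p a \<le> scalar_cost s p c"
  proof (cases "a = 0")
    case True
    have "(aa j - pp j)\<^sup>2 / 2 \<le> scalar_cost s (pp j) c" for j
      using le[of j] s by (auto simp: scalar_cost_def split: if_splits)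
    then have "(a - p)\<^sup>2 / 2 \<le> scalar_cost s p c" by (intro LIMSEQ_le[OF dist cost_c]) auto
    then show ?thesis using True by (simp add: scalar_cost_def)
  next
    case False
    \<comment> \<open>the support indicator is continuous away from \<open>0\<close>\<close>
    have "eventually (\<lambda>j. aa j \<noteq> 0) sequentially"
      using tendsto_imp_eventually_ne[OF a False] .
    then have "eventually (\<lambda>j. (aa j - pp j)\<^sup>2 / 2 + s \<le> scalar_cost s (pp j) c) sequentially"
    proof eventually_elim
      case (elim j)
      then show ?case using le[of j] by (simp add: scalar_cost_def)
    qed
    moreover have "(\<lambda>j. (aa j - pp j)\<^sup>2 / 2 + s) \<longlonglongrightarrow> (a - p)\<^sup>2 / 2 + s"
      by (intro tendsto_intros dist)
    ultimately have "(a - p)\<^sup>2 / 2 + s \<le> scalar_cost s p c"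
      by (intro tendsto_le[OF sequentially_bot cost_c])
    then show ?thesis using False by (simp add: scalar_cost_def)
  qed
qed

lemma box_proj_rescale:
  assumes \<alpha>: "\<alpha> > 0" and L\<alpha>: "L + \<alpha> > 0" and b: "b > 0" and a: "a = box_proj b p"
  shows "a = box_proj b (((L + \<alpha>) * p - L * a) / \<alpha>)"
proof (cases "a = p")
  case True
  then have "((L + \<alpha>) * p - L * a) / \<alpha> = p" using \<alpha> by (simp add: field_simps)
  then show ?thesis using True a by simp
next
  case False
  then obtain r where r: "b = ereal r" "r > 0" and "a = r \<and> r < p \<or> a = - r \<and> p < - r"
    using a b by (cases b) (auto simp: box_proj_def max_def min_def split: if_splits)
  then consider "a = r" "r < p" | "a = - r" "p < - r" by blast
  then show ?thesis
  proof cases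
    case 1
    have "(L + \<alpha>) * r < (L + \<alpha>) * p" using 1 L\<alpha> by simp
    then have "r < ((L + \<alpha>) * p - L * a) / \<alpha>" using 1 \<alpha> by (simp add: field_simps)
    then show ?thesis using 1 r by (simp add: box_proj_def)
  next
    case 2
    have "(L + \<alpha>) * p < (L + \<alpha>) * (- r)" using 2 L\<alpha> by (simp only: mult_less_cancel_left_pos)
    then have "((L + \<alpha>) * p - L * a) / \<alpha> < - r" using 2 \<alpha> by (simp add: field_simps)
    then show ?thesis using 2 r by (simp add: box_proj_def)
  qed
qed

text \<open>A nonzero coordinate of an IHT step is a box projection whose argument depends on the
  previous iterate \<open>u\<close> only through the step \<open>a - u\<close>.\<close>

lemma scalar_minimizer_step:
  assumes b: "b > 0" and s: "s > 0" and \<alpha>: "\<alpha> > 0" and L\<alpha>: "L + \<alpha> > 0"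
    and min: "scalar_minimizer s b ((L * u - g) / (L + \<alpha>)) a"
  shows "(a \<noteq> 0 \<longrightarrow> support_threshold s b \<le> \<bar>a\<bar> \<and> a = box_proj b ((- g - L * (a - u)) / \<alpha>))
         \<and> \<bar>a\<bar> \<le> \<bar>(- g - L * (a - u)) / \<alpha>\<bar>"
proof (cases "a = 0")
  case False
  from scalar_minimizer_nonzero[OF b s min False]
  have a: "a = box_proj b ((L * u - g) / (L + \<alpha>))" and "support_threshold s b \<le> \<bar>a\<bar>" by auto
  moreover have "(L + \<alpha>) * ((L * u - g) / (L + \<alpha>)) - L * a = - g - L * (a - u)"
    using L\<alpha> by (simp add: field_simps)
  then have "a = box_proj b ((- g - L * (a - u)) / \<alpha>)"
    using box_proj_rescale[OF \<alpha> L\<alpha> b a] by simp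
  moreover note abs_box_proj_le[OF b, of "(- g - L * (a - u)) / \<alpha>"]
  ultimately show ?thesis by metis
qed simp

lemma scalar_iht_subseq_tendsto:
  fixes U G :: "nat \<Rightarrow> real" and n :: "nat \<Rightarrow> nat"
  assumes b: "b > 0" and s: "s > 0" and \<alpha>: "\<alpha> > 0" and L\<alpha>: "L + \<alpha> > 0"
    and min: "\<And>k. scalar_minimizer s b ((L * U k - G k) / (L + \<alpha>)) (U (Suc k))"
    and steps: "(\<lambda>k. U (Suc k) - U k) \<longlonglongrightarrow> 0"
    and n: "strict_mono n" and G: "(\<lambda>j. G (n j)) \<longlonglongrightarrow> g"
  obtains w where "(\<lambda>j. U (n j)) \<longlonglongrightarrow> w" "scalar_minimizer s b ((L * w - g) / (L + \<alpha>)) w"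
proof -
  define d where "d k = U (Suc k) - U k" for k
  have step: "U (Suc k) \<noteq> 0 \<longrightarrow> support_threshold s b \<le> \<bar>U (Suc k)\<bar>
      \<and> U (Suc k) = box_proj b ((- G k - L * d k) / \<alpha>)" for k
    using scalar_minimizer_step[OF b s \<alpha> L\<alpha> min[of k]] unfolding d_def by blast
  have \<delta>: "support_threshold s b > 0"
    using b s by (cases b) (auto simp: support_threshold_def)
  have "(\<lambda>k. U (Suc (Suc k)) - U (Suc k)) \<longlonglongrightarrow> 0"
    using LIMSEQ_Suc[OF steps] .
  then obtain K where K: "\<And>k. K \<le> k \<Longrightarrow> U (Suc k) = 0 \<longleftrightarrow> U (Suc K) = 0"
    using eventually_zero_pattern_constant[OF \<delta>, of "\<lambda>k. U (Suc k)"] step by blast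
  have late: "eventually (\<lambda>j. K \<le> n j) sequentially"
    using filterlim_subseq[OF n] by (simp add: filterlim_at_top)
  have dn: "(\<lambda>j. d (n j)) \<longlonglongrightarrow> 0"
    using LIMSEQ_subseq_LIMSEQ[OF steps n] by (simp add: d_def o_def)
  obtain w where w: "(\<lambda>j. U (Suc (n j))) \<longlonglongrightarrow> w"
  proof (cases "U (Suc K) = 0")
    case True
    have "eventually (\<lambda>j. U (Suc (n j)) = 0) sequentially"
      using late by eventually_elim (use K True in blast)
    then have "(\<lambda>j. U (Suc (n j))) \<longlonglongrightarrow> 0" by (rule tendsto_eventually)
    then show ?thesis by (rule that)
  next
    case False
    define q where "q j = (- G (n j) - L * d (n j)) / \<alpha>" for j
    have ev: "eventually (\<lambda>j. box_proj b (q j) = U (Suc (n j))) sequentially"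
      using late
    proof eventually_elim
      case (elim j)
      have "U (Suc (n j)) \<noteq> 0" using K[OF elim] False by simp
      with step[of "n j"] have "U (Suc (n j)) = box_proj b (q j)" unfolding q_def by blast
      then show ?case by simp
    qed
    have "q \<longlonglongrightarrow> (- g - L * 0) / \<alpha>"
      unfolding q_def by (intro tendsto_intros G dn) (use \<alpha> in simp)
    then have "(\<lambda>j. box_proj b (q j)) \<longlonglongrightarrow> box_proj b ((- g - L * 0) / \<alpha>)"
      by (intro continuous_on_tendsto_compose[OF continuous_on_box_proj]) auto
    from this ev have "(\<lambda>j. U (Suc (n j))) \<longlonglongrightarrow> box_proj b ((- g - L * 0) / \<alpha>)"
      by (rule Lim_transform_eventually)
    then show ?thesis by (rule that)
  qed
  have "(\<lambda>j. U (Suc (n j)) - d (n j)) \<longlonglongrightarrow> w - 0" by (intro tendsto_intros w dn)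
  then have Un: "(\<lambda>j. U (n j)) \<longlonglongrightarrow> w" by (simp add: d_def)
  have p: "(\<lambda>j. (L * U (n j) - G (n j)) / (L + \<alpha>)) \<longlonglongrightarrow> (L * w - g) / (L + \<alpha>)"
    by (intro tendsto_intros Un G) (use L\<alpha> in simp)
  have "scalar_minimizer s b ((L * w - g) / (L + \<alpha>)) w"
    by (rule scalar_minimizer_closed[OF b s p w min])
  with Un show ?thesis using that by blast
qed

lemma abs_scalar_iht_iterate_le:
  assumes b: "b > 0" and s: "s > 0" and \<alpha>: "\<alpha> > 0" and L\<alpha>: "L + \<alpha> > 0"
    and min: "scalar_minimizer s b ((L * u - g') / (L + \<alpha>)) a"
    and step: "\<bar>a - u\<bar> \<le> D" and grad: "\<bar>g' - g\<bar> \<le> H"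
  shows "\<bar>u\<bar> \<le> D + (\<bar>g\<bar> + H + \<bar>L\<bar> * D) / \<alpha>"
proof -
  have "\<bar>a\<bar> \<le> \<bar>(- g' - L * (a - u)) / \<alpha>\<bar>"
    using scalar_minimizer_step[OF b s \<alpha> L\<alpha> min] by blast
  also have "\<dots> = \<bar>g' + L * (a - u)\<bar> / \<alpha>"
    using \<alpha> by (simp add: abs_minus_commute)
  also have "\<dots> \<le> (\<bar>g\<bar> + H + \<bar>L\<bar> * D) / \<alpha>"
  proof (rule divide_right_mono)
    have "\<bar>g' + L * (a - u)\<bar> \<le> \<bar>g\<bar> + \<bar>g' - g\<bar> + \<bar>L\<bar> * \<bar>a - u\<bar>"
      unfolding abs_mult[symmetric] by linarith
    also have "\<dots> \<le> \<bar>g\<bar> + H + \<bar>L\<bar> * D"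
      using grad step by (intro add_mono mult_left_mono) auto
    finally show "\<bar>g' + L * (a - u)\<bar> \<le> \<bar>g\<bar> + H + \<bar>L\<bar> * D" .
  qed (use \<alpha> in simp)
  finally show ?thesis using step by linarith
qed

lemma borel_measurable_scalar_cost[measurable (raw)]:
  fixes F G :: "'b \<Rightarrow> real"
  assumes [measurable]: "F \<in> borel_measurable N" "G \<in> borel_measurable N"
  shows "(\<lambda>x. scalar_cost s (F x) (G x)) \<in> borel_measurable N"
proof -
  have [measurable]: "(\<lambda>x. if G x = 0 then 0 else 1 :: real) \<in> borel_measurable N"
    by (rule measurable_If) (auto simp: pred_def)
  show ?thesis unfolding scalar_cost_def by measurable
qed

lemma borel_measurable_scalar_argmin[measurable (raw)]:
  fixes F :: "'b \<Rightarrow> real"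
  assumes [measurable]: "F \<in> borel_measurable N"
  shows "(\<lambda>x. scalar_argmin s b (F x)) \<in> borel_measurable N"
  unfolding scalar_argmin_def by measurable

section \<open>Square-integrable functions on a set of finite measure\<close>

definition completely_continuous :: "'a::euclidean_space set \<Rightarrow> (('a \<Rightarrow> real) \<Rightarrow> ('a \<Rightarrow> real)) \<Rightarrow> bool"
  where "completely_continuous \<Omega> G \<longleftrightarrow>
    (\<forall>w w0. (\<forall>n. w n \<in> L2 \<Omega>) \<longrightarrow> w0 \<in> L2 \<Omega> \<longrightarrow> weak_conv_L2 \<Omega> w w0 \<longrightarrow>
       (\<lambda>n. L2norm \<Omega> (\<lambda>x. G (w n) x - G w0 x)) \<longlonglongrightarrow> 0)"

lemma weak_conv_L2_subseq:
  assumes "weak_conv_L2 \<Omega> w w0" and "strict_mono \<sigma>"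
  shows "weak_conv_L2 \<Omega> (\<lambda>j. w (\<sigma> j)) w0"
  using assms LIMSEQ_subseq_LIMSEQ unfolding weak_conv_L2_def o_def by blast

lemma iht_integrand_identity:
  fixes A L \<alpha> \<beta> g u c p I :: real
  assumes "A = L + \<alpha>" "A \<noteq> 0" "A * p = L * u - g"
  shows "g * (c - u) + L / 2 * (c - u)\<^sup>2 + \<alpha> / 2 * c\<^sup>2 + \<beta> * I
     = (- g * u + L / 2 * u\<^sup>2 - A / 2 * p\<^sup>2) + A * ((c - p)\<^sup>2 / 2 + \<beta> / A * I)"
proof -
  have "A * ((c - p)\<^sup>2 / 2 + \<beta> / A * I) = A / 2 * c\<^sup>2 - c * (A * p) + A / 2 * p\<^sup>2 + \<beta> * I"
    using assms by (simp add: power2_diff field_simps)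
  also have "\<dots> = (L + \<alpha>) / 2 * c\<^sup>2 - c * (L * u - g) + A / 2 * p\<^sup>2 + \<beta> * I"
    using assms by simp
  finally show ?thesis by (simp add: power2_diff algebra_simps)
qed

locale L2_domain =
  fixes \<Omega> :: "'a::euclidean_space set"
  assumes lmeasurable_domain: "\<Omega> \<in> lmeasurable"
begin

lemma finite_measure_domain: "finite_measure (lebesgue_on \<Omega>)"
  using finite_measure_lebesgue_on[OF lmeasurable_domain] .

lemma AE_if_null_domain:
  assumes "measure (lebesgue_on \<Omega>) \<Omega> = 0"
  shows "AE x in lebesgue_on \<Omega>. P x"
proof (rule AE_I')
  show "\<Omega> \<in> null_sets (lebesgue_on \<Omega>)"
    using assms finite_measure.emeasure_eq_measure[OF finite_measure_domain]
    by (simp add: null_sets_def sets.top[of "lebesgue_on \<Omega>", simplified])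
qed (simp add: subset_iff)

lemma integrable_const_domain[simp, intro]: "integrable (lebesgue_on \<Omega>) (\<lambda>x. c :: real)"
  using finite_measure.integrable_const[OF finite_measure_domain] .

lemma L2I:
  "u \<in> borel_measurable (lebesgue_on \<Omega>) \<Longrightarrow> integrable (lebesgue_on \<Omega>) (\<lambda>x. (u x)\<^sup>2) \<Longrightarrow> u \<in> L2 \<Omega>"
  by (simp add: L2_def)

lemma L2_borel_measurable[measurable_dest]: "u \<in> L2 \<Omega> \<Longrightarrow> u \<in> borel_measurable (lebesgue_on \<Omega>)"
  by (simp add: L2_def)

lemma L2_integrable_square: "u \<in> L2 \<Omega> \<Longrightarrow> integrable (lebesgue_on \<Omega>) (\<lambda>x. (u x)\<^sup>2)"
  by (simp add: L2_def)

lemma L2_if_square_dominated: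
  assumes "u \<in> borel_measurable (lebesgue_on \<Omega>)" "integrable (lebesgue_on \<Omega>) h"
    "AE x in lebesgue_on \<Omega>. (u x)\<^sup>2 \<le> h x"
  shows "u \<in> L2 \<Omega>"
proof (rule L2I[OF assms(1)])
  show "integrable (lebesgue_on \<Omega>) (\<lambda>x. (u x)\<^sup>2)"
    by (rule Bochner_Integration.integrable_bound[OF assms(2)]) (use assms(1,3) in auto)
qed

lemma L2_if_dominated:
  assumes "u \<in> borel_measurable (lebesgue_on \<Omega>)" "w \<in> L2 \<Omega>"
    "AE x in lebesgue_on \<Omega>. \<bar>u x\<bar> \<le> \<bar>w x\<bar>"
  shows "u \<in> L2 \<Omega>"
  using assms(3) by (intro L2_if_square_dominated[OF assms(1) L2_integrable_square[OF assms(2)]])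
     (auto elim!: AE_mp intro!: AE_I2 simp: abs_le_square_iff[symmetric])

lemma L2_integrable_mult:
  assumes "u \<in> L2 \<Omega>" "v \<in> L2 \<Omega>"
  shows "integrable (lebesgue_on \<Omega>) (\<lambda>x. u x * v x)"
proof (rule Bochner_Integration.integrable_bound)
  show "integrable (lebesgue_on \<Omega>) (\<lambda>x. (u x)\<^sup>2 + (v x)\<^sup>2)"
    using L2_integrable_square[OF assms(1)] L2_integrable_square[OF assms(2)] by auto
  show "(\<lambda>x. u x * v x) \<in> borel_measurable (lebesgue_on \<Omega>)" using assms by measurable
  have "\<bar>u x * v x\<bar> \<le> (u x)\<^sup>2 + (v x)\<^sup>2" for x
  proof -
    have "2 * (\<bar>u x\<bar> * \<bar>v x\<bar>) \<le> (u x)\<^sup>2 + (v x)\<^sup>2"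
      using sum_squares_bound[of "\<bar>u x\<bar>" "\<bar>v x\<bar>"] by (simp add: mult.assoc)
    then show ?thesis unfolding abs_mult using mult_nonneg_nonneg[of "\<bar>u x\<bar>" "\<bar>v x\<bar>"] by linarith
  qed
  then show "AE x in lebesgue_on \<Omega>. norm (u x * v x) \<le> norm ((u x)\<^sup>2 + (v x)\<^sup>2)" by auto
qed

lemma L2_add[intro]: "u \<in> L2 \<Omega> \<Longrightarrow> v \<in> L2 \<Omega> \<Longrightarrow> (\<lambda>x. u x + v x) \<in> L2 \<Omega>"
proof (rule L2_if_square_dominated)
  assume "u \<in> L2 \<Omega>" "v \<in> L2 \<Omega>"
  then show "(\<lambda>x. u x + v x) \<in> borel_measurable (lebesgue_on \<Omega>)" by measurable
  show "integrable (lebesgue_on \<Omega>) (\<lambda>x. 2 * (u x)\<^sup>2 + 2 * (v x)\<^sup>2)"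
    using L2_integrable_square[OF \<open>u \<in> L2 \<Omega>\<close>] L2_integrable_square[OF \<open>v \<in> L2 \<Omega>\<close>] by auto
  have "(u x + v x)\<^sup>2 \<le> 2 * (u x)\<^sup>2 + 2 * (v x)\<^sup>2" for x
    using zero_le_power2[of "u x - v x"] by (simp add: power2_diff power2_sum)
  then show "AE x in lebesgue_on \<Omega>. (u x + v x)\<^sup>2 \<le> 2 * (u x)\<^sup>2 + 2 * (v x)\<^sup>2" by auto
qed

lemma L2_scale[intro]: "u \<in> L2 \<Omega> \<Longrightarrow> (\<lambda>x. c * u x) \<in> L2 \<Omega>"
  by (rule L2I) (auto simp: power_mult_distrib intro!: L2_integrable_square)

lemma L2_diff[intro]: "u \<in> L2 \<Omega> \<Longrightarrow> v \<in> L2 \<Omega> \<Longrightarrow> (\<lambda>x. u x - v x) \<in> L2 \<Omega>"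
  using L2_add[of u "\<lambda>x. - 1 * v x"] L2_scale[of v "- 1"] by simp

lemma L2_abs[intro]: "u \<in> L2 \<Omega> \<Longrightarrow> (\<lambda>x. \<bar>u x\<bar>) \<in> L2 \<Omega>"
  by (rule L2I) (auto intro!: L2_integrable_square)

lemma L2norm_nonneg: "L2norm \<Omega> u \<ge> 0"
  unfolding L2norm_def by (simp add: integral_nonneg_AE)

lemma L2norm_square: "u \<in> L2 \<Omega> \<Longrightarrow> (L2norm \<Omega> u)\<^sup>2 = (\<integral>x. (u x)\<^sup>2 \<partial>lebesgue_on \<Omega>)"
  unfolding L2norm_def by (simp add: integral_nonneg_AE)

lemma L2norm_scale: "L2norm \<Omega> (\<lambda>x. t * h x) = \<bar>t\<bar> * L2norm \<Omega> h"
  unfolding L2norm_def by (simp add: power_mult_distrib real_sqrt_mult)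

lemma L2inner_diff_left:
  "a \<in> L2 \<Omega> \<Longrightarrow> b \<in> L2 \<Omega> \<Longrightarrow> h \<in> L2 \<Omega> \<Longrightarrow>
   L2inner \<Omega> a h - L2inner \<Omega> b h = L2inner \<Omega> (\<lambda>x. a x - b x) h"
  unfolding L2inner_def by (simp add: left_diff_distrib L2_integrable_mult)

lemma L2inner_scale_right: "L2inner \<Omega> a (\<lambda>x. t * h x) = t * L2inner \<Omega> a h"
  unfolding L2inner_def by (simp add: algebra_simps)

lemma L2inner_le_norm_mult:
  assumes u: "u \<in> L2 \<Omega>" and v: "v \<in> L2 \<Omega>"
  shows "L2inner \<Omega> u v \<le> L2norm \<Omega> u * L2norm \<Omega> v"
proof -
  define A where "A = (\<integral>x. (u x)\<^sup>2 \<partial>lebesgue_on \<Omega>)"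
  define B where "B = (\<integral>x. (v x)\<^sup>2 \<partial>lebesgue_on \<Omega>)"
  define I where "I = L2inner \<Omega> u v"
  have A0: "A \<ge> 0" and B0: "B \<ge> 0" unfolding A_def B_def by (simp_all add: integral_nonneg_AE)
  have quadratic_nonneg: "0 \<le> A - 2 * t * I + t\<^sup>2 * B" for t
  proof -
    have "0 \<le> (\<integral>x. (u x - t * v x)\<^sup>2 \<partial>lebesgue_on \<Omega>)" by (simp add: integral_nonneg_AE)
    also have "\<dots> = (\<integral>x. (u x)\<^sup>2 - 2 * t * (u x * v x) + t\<^sup>2 * (v x)\<^sup>2 \<partial>lebesgue_on \<Omega>)"
      by (simp add: power2_diff power_mult_distrib algebra_simps)
    also have "\<dots> = A - 2 * t * I + t\<^sup>2 * B"
      unfolding A_def B_def I_def L2inner_def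
      using L2_integrable_square[OF u] L2_integrable_square[OF v] L2_integrable_mult[OF u v] by simp
    finally show ?thesis .
  qed
  have "I\<^sup>2 \<le> A * B"
  proof (cases "B = 0")
    case True
    have "I = 0"
    proof (rule ccontr)
      assume "I \<noteq> 0"
      from quadratic_nonneg[of "(A + 1) / (2 * I)"] True \<open>I \<noteq> 0\<close> show False
        by (simp add: field_simps)
    qed
    then show ?thesis using A0 B0 by simp
  next
    case False
    then have "B > 0" using B0 by simp
    have "0 \<le> A - 2 * (I / B) * I + (I / B)\<^sup>2 * B" by (rule quadratic_nonneg)
    also have "\<dots> = A - I\<^sup>2 / B" using \<open>B > 0\<close> by (simp add: field_simps power2_eq_square)
    finally show ?thesis using \<open>B > 0\<close> by (simp add: field_simps)
  qed
  then have "\<bar>I\<bar> \<le> sqrt A * sqrt B"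
    by (metis A0 B0 real_sqrt_abs real_sqrt_le_mono real_sqrt_mult)
  then show ?thesis unfolding I_def L2norm_def A_def B_def by simp
qed

lemma L0norm_eq_integral:
  "L0norm \<Omega> v = (\<integral>x. (if v x = 0 then 0 else 1) \<partial>lebesgue_on \<Omega>)"
proof -
  have "(\<integral>x. (if v x = 0 then 0 else 1) \<partial>lebesgue_on \<Omega>) =
        (\<integral>x. indicator {x. v x \<noteq> 0} x \<partial>lebesgue_on \<Omega>)"
    by (intro Bochner_Integration.integral_cong) (auto simp: indicator_def)
  also have "\<dots> = measure (lebesgue_on \<Omega>) ({x. v x \<noteq> 0} \<inter> \<Omega>)" by simp
  also have "{x. v x \<noteq> 0} \<inter> \<Omega> = {x \<in> \<Omega>. v x \<noteq> 0}" by auto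
  finally show ?thesis unfolding L0norm_def by simp
qed

lemma Uad_L2: "v \<in> Uad \<Omega> b \<Longrightarrow> v \<in> L2 \<Omega>"
  by (simp add: Uad_def)

lemma Uad_AE_in_box: "v \<in> Uad \<Omega> b \<Longrightarrow> AE x in lebesgue_on \<Omega>. in_box b (v x)"
  by (simp add: Uad_def in_box_def)

lemma L2_square_summable_envelope:
  fixes h :: "nat \<Rightarrow> 'a \<Rightarrow> real"
  assumes h: "\<And>j. h j \<in> L2 \<Omega>" and sum: "summable (\<lambda>j. (L2norm \<Omega> (h j))\<^sup>2)"
  obtains H where "H \<in> L2 \<Omega>"
    "AE x in lebesgue_on \<Omega>. (\<forall>j. \<bar>h j x\<bar> \<le> H x) \<and> (\<lambda>j. h j x) \<longlonglongrightarrow> 0"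
proof -
  let ?M = "lebesgue_on \<Omega>"
  have hm[measurable]: "h j \<in> borel_measurable ?M" for j using h by measurable
  have hi: "integrable ?M (\<lambda>x. (h j x)\<^sup>2)" for j using L2_integrable_square[OF h] .
  have sum_int: "summable (\<lambda>j. \<integral>x. (h j x)\<^sup>2 \<partial>?M)"
    using sum by (simp add: L2norm_square[OF h])
  have "(\<integral>\<^sup>+ x. (\<Sum>j. ennreal ((h j x)\<^sup>2)) \<partial>?M) = (\<Sum>j. \<integral>\<^sup>+ x. ennreal ((h j x)\<^sup>2) \<partial>?M)"
    by (rule nn_integral_suminf) measurable
  also have "\<dots> = (\<Sum>j. ennreal (\<integral>x. (h j x)\<^sup>2 \<partial>?M))"
    by (intro suminf_cong nn_integral_eq_integral hi) auto
  also have "\<dots> = ennreal (\<Sum>j. \<integral>x. (h j x)\<^sup>2 \<partial>?M)"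
    by (rule suminf_ennreal2[OF _ sum_int]) (simp add: integral_nonneg_AE)
  finally have "(\<integral>\<^sup>+ x. (\<Sum>j. ennreal ((h j x)\<^sup>2)) \<partial>?M) \<noteq> \<infinity>" by simp
  then have "AE x in ?M. (\<Sum>j. ennreal ((h j x)\<^sup>2)) \<noteq> \<infinity>"
    by (intro nn_integral_PInf_AE) measurable
  then have summable: "AE x in ?M. summable (\<lambda>j. (h j x)\<^sup>2)"
    by eventually_elim (rule summable_suminf_not_top, auto)
  have "integrable ?M (\<lambda>x. \<Sum>j. (h j x)\<^sup>2)"
    by (rule integrable_suminf) (use hi summable sum_int in auto)
  define H where "H x = sqrt (\<Sum>j. (h j x)\<^sup>2)" for x
  have "H \<in> L2 \<Omega>"
  proof (rule L2_if_square_dominated)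
    show "H \<in> borel_measurable ?M" unfolding H_def by measurable
    show "integrable ?M (\<lambda>x. \<Sum>j. (h j x)\<^sup>2)" by fact
    show "AE x in ?M. (H x)\<^sup>2 \<le> (\<Sum>j. (h j x)\<^sup>2)"
      using summable
    proof eventually_elim
      case (elim x)
      then show ?case using suminf_nonneg[OF elim] by (simp add: H_def)
    qed
  qed
  moreover have "AE x in ?M. (\<forall>j. \<bar>h j x\<bar> \<le> H x) \<and> (\<lambda>j. h j x) \<longlonglongrightarrow> 0"
    using summable
  proof eventually_elim
    case (elim x)
    have "(h j x)\<^sup>2 \<le> (\<Sum>j. (h j x)\<^sup>2)" for j
      using sum_le_suminf[OF elim, of "{j}"] by simp
    then have "\<forall>j. \<bar>h j x\<bar> \<le> H x" unfolding H_def by (simp add: real_le_rsqrt)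
    moreover have "(\<lambda>j. (h j x)\<^sup>2) \<longlonglongrightarrow> 0" using summable_LIMSEQ_zero[OF elim] .
    then have "(\<lambda>j. sqrt ((h j x)\<^sup>2)) \<longlonglongrightarrow> sqrt 0" by (intro tendsto_intros)
    then have "(\<lambda>j. h j x) \<longlonglongrightarrow> 0" by (simp add: tendsto_rabs_zero_iff)
    ultimately show ?case by blast
  qed
  ultimately show ?thesis using that by blast
qed

lemma Lq_tendsto_if_AE_tendsto_dominated:
  fixes v :: "nat \<Rightarrow> 'a \<Rightarrow> real"
  assumes vm: "\<And>j. v j \<in> borel_measurable (lebesgue_on \<Omega>)" and w: "w \<in> L2 \<Omega>"
    and lim: "AE x in lebesgue_on \<Omega>. (\<lambda>j. v j x) \<longlonglongrightarrow> w x"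
    and D: "D \<in> L2 \<Omega>" and bound: "\<And>j. AE x in lebesgue_on \<Omega>. \<bar>v j x\<bar> \<le> D x"
    and q: "1 \<le> q" "q < 2"
  shows "(\<lambda>j. \<integral>x. \<bar>v j x - w x\<bar> powr q \<partial>lebesgue_on \<Omega>) \<longlonglongrightarrow> 0"
proof -
  let ?M = "lebesgue_on \<Omega>"
  have [measurable]: "w \<in> borel_measurable ?M" using w by measurable
  define E where "E x = 1 + (\<bar>D x\<bar> + \<bar>w x\<bar>)\<^sup>2" for x
  have "integrable ?M E" unfolding E_def
    using L2_integrable_square[OF L2_add[OF L2_abs[OF D] L2_abs[OF w]]] by simp
  then have "(\<lambda>j. \<integral>x. \<bar>v j x - w x\<bar> powr q \<partial>?M) \<longlonglongrightarrow> (\<integral>x. 0 \<partial>?M)"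
  proof (rule integral_dominated_convergence[rotated 2])
    show "(\<lambda>x. \<bar>v j x - w x\<bar> powr q) \<in> borel_measurable ?M" for j
      using vm[of j] by measurable
    show "AE x in ?M. (\<lambda>j. \<bar>v j x - w x\<bar> powr q) \<longlonglongrightarrow> 0"
      using lim
    proof eventually_elim
      case (elim x)
      have "(\<lambda>j. \<bar>v j x - w x\<bar>) \<longlonglongrightarrow> \<bar>w x - w x\<bar>" by (intro tendsto_intros elim)
      then have "(\<lambda>j. \<bar>v j x - w x\<bar> powr q) \<longlonglongrightarrow> 0 powr q"
        using q by (intro tendsto_powr') auto
      then show ?case by simp
    qed
    show "AE x in ?M. norm (\<bar>v j x - w x\<bar> powr q) \<le> E x" for j
      using bound[of j]
    proof eventually_elim
      case (elim x)
      define y where "y = \<bar>v j x - w x\<bar>"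
      have "y powr q \<le> 1 + y\<^sup>2"
      proof (cases "y \<le> 1")
        case True then show ?thesis using powr_le1[of q y] q by (simp add: y_def add_increasing2)
      next
        case False
        then have "y powr q \<le> y powr 2" using q by (intro powr_mono) auto
        also have "y powr 2 = y\<^sup>2" using False by (simp add: powr_numeral)
        finally show ?thesis by simp
      qed
      also have "y\<^sup>2 \<le> (\<bar>D x\<bar> + \<bar>w x\<bar>)\<^sup>2"
        using elim unfolding y_def by (intro power_mono) auto
      finally show ?case unfolding E_def y_def by simp
    qed
  qed simp
  then show ?thesis by simp
qed

lemma weak_limit_AE_tendsto:
  fixes v :: "nat \<Rightarrow> 'a \<Rightarrow> real"
  assumes vm: "\<And>j. v j \<in> borel_measurable (lebesgue_on \<Omega>)" and w: "w \<in> L2 \<Omega>"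
    and weak: "weak_conv_L2 \<Omega> v w"
    and conv: "AE x in lebesgue_on \<Omega>. convergent (\<lambda>j. v j x)"
    and D: "D \<in> L2 \<Omega>" and bound: "\<And>j. AE x in lebesgue_on \<Omega>. \<bar>v j x\<bar> \<le> D x"
  shows "AE x in lebesgue_on \<Omega>. (\<lambda>j. v j x) \<longlonglongrightarrow> w x"
proof -
  let ?M = "lebesgue_on \<Omega>"
  have [measurable]: "v j \<in> borel_measurable ?M" for j by (rule vm)
  \<comment> \<open>a measurable representative of the pointwise limit\<close>
  define W where "W x = real_of_ereal (liminf (\<lambda>j. ereal (v j x)))" for x
  have Wm[measurable]: "W \<in> borel_measurable ?M" unfolding W_def by measurable
  have lim: "AE x in ?M. (\<lambda>j. v j x) \<longlonglongrightarrow> W x"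
    using conv
  proof eventually_elim
    case (elim x)
    then obtain l where l: "(\<lambda>j. v j x) \<longlonglongrightarrow> l" by (auto simp: convergent_def)
    then have "liminf (\<lambda>j. ereal (v j x)) = ereal l"
      by (intro lim_imp_Liminf) (auto intro: tendsto_ereal)
    then show ?case using l by (simp add: W_def)
  qed
  have "AE x in ?M. \<forall>j. \<bar>v j x\<bar> \<le> D x" using bound by (simp add: AE_all_countable)
  with lim have "AE x in ?M. \<bar>W x\<bar> \<le> D x"
  proof eventually_elim
    case (elim x)
    have "(\<lambda>j. \<bar>v j x\<bar>) \<longlonglongrightarrow> \<bar>W x\<bar>" by (intro tendsto_intros elim)
    then show ?case using elim by (intro LIMSEQ_le_const2) auto
  qed
  then have WL: "W \<in> L2 \<Omega>"
    by (intro L2_if_dominated[OF Wm D]) (auto elim!: AE_mp)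
  define z where "z x = W x - w x" for x
  have zL: "z \<in> L2 \<Omega>" unfolding z_def using WL w by auto
  have [measurable]: "z \<in> borel_measurable ?M" using zL by measurable
  have "(\<lambda>j. \<integral>x. v j x * z x \<partial>?M) \<longlonglongrightarrow> (\<integral>x. W x * z x \<partial>?M)"
  proof (rule integral_dominated_convergence[OF _ _ L2_integrable_mult[OF D L2_abs[OF zL]]])
    show "AE x in ?M. (\<lambda>j. v j x * z x) \<longlonglongrightarrow> W x * z x"
      using lim by eventually_elim (intro tendsto_intros)
    show "AE x in ?M. norm (v j x * z x) \<le> D x * \<bar>z x\<bar>" for j
      using bound[of j] by eventually_elim (auto simp: abs_mult intro!: mult_right_mono)
  qed measurable
  moreover have "(\<lambda>j. \<integral>x. v j x * z x \<partial>?M) \<longlonglongrightarrow> (\<integral>x. w x * z x \<partial>?M)"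
    using weak zL unfolding weak_conv_L2_def L2inner_def by blast
  ultimately have "(\<integral>x. W x * z x \<partial>?M) = (\<integral>x. w x * z x \<partial>?M)" by (rule LIMSEQ_unique)
  then have "(\<integral>x. (z x)\<^sup>2 \<partial>?M) = 0"
    using L2_integrable_mult[OF WL zL] L2_integrable_mult[OF w zL]
    by (simp add: z_def power2_eq_square left_diff_distrib)
  then have "AE x in ?M. (z x)\<^sup>2 = 0"
    using integral_nonneg_eq_0_iff_AE[of ?M "\<lambda>x. (z x)\<^sup>2"] L2_integrable_square[OF zL] by simp
  then show ?thesis using lim by eventually_elim (simp add: z_def)
qed

lemma integrable_scalar_cost:
  assumes p: "p \<in> L2 \<Omega>" and v: "v \<in> L2 \<Omega>"
  shows "integrable (lebesgue_on \<Omega>) (\<lambda>x. scalar_cost s (p x) (v x))"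
proof (rule Bochner_Integration.integrable_bound)
  show "integrable (lebesgue_on \<Omega>) (\<lambda>x. (v x - p x)\<^sup>2 / 2 + \<bar>s\<bar>)"
    using L2_integrable_square[OF L2_diff[OF v p]] by simp
  show "AE x in lebesgue_on \<Omega>. norm (scalar_cost s (p x) (v x)) \<le> norm ((v x - p x)\<^sup>2 / 2 + \<bar>s\<bar>)"
    by (intro AE_I2) (metis abs_scalar_cost_le abs_ge_self order_trans real_norm_def)
qed (use p v in measurable)

text \<open>The integral of a pointwise cost is minimised over \<open>Uad\<close> only by pointwise minimisers:
  otherwise replacing \<open>u\<close> by the measurable selection \<open>scalar_argmin\<close> where it does better
  strictly decreases the integral.\<close>

lemma AE_scalar_minimizer_if_integral_minimal:
  assumes p: "p \<in> L2 \<Omega>" and u: "u \<in> Uad \<Omega> b" and b: "b > 0" and s: "s > 0"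
    and minimal: "\<And>v. v \<in> Uad \<Omega> b \<Longrightarrow>
      (\<integral>x. scalar_cost s (p x) (u x) \<partial>lebesgue_on \<Omega>) \<le> (\<integral>x. scalar_cost s (p x) (v x) \<partial>lebesgue_on \<Omega>)"
  shows "AE x in lebesgue_on \<Omega>. scalar_minimizer s b (p x) (u x)"
proof -
  let ?M = "lebesgue_on \<Omega>"
  have uL: "u \<in> L2 \<Omega>" using u by (rule Uad_L2)
  note [measurable] = L2_borel_measurable[OF p] L2_borel_measurable[OF uL]
  define a where "a x = scalar_argmin s b (p x)" for x
  have [measurable]: "a \<in> borel_measurable ?M" unfolding a_def by measurable
  define v where
    "v x = (if scalar_cost s (p x) (a x) < scalar_cost s (p x) (u x) then a x else u x)" for x
  have [measurable]: "v \<in> borel_measurable ?M" unfolding v_def by measurable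
  have vL: "v \<in> L2 \<Omega>"
  proof (rule L2_if_dominated[OF _ L2_add[OF L2_abs[OF uL] L2_abs[OF p]]])
    show "AE x in ?M. \<bar>v x\<bar> \<le> \<bar>\<bar>u x\<bar> + \<bar>p x\<bar>\<bar>"
      by (auto simp: v_def a_def intro!: AE_I2 order_trans[OF abs_scalar_argmin_le[OF b]])
  qed measurable
  have "AE x in ?M. in_box b (v x)"
    using Uad_AE_in_box[OF u] by eventually_elim
      (use scalar_minimizer_scalar_argmin[OF b s] in \<open>auto simp: v_def a_def scalar_minimizer_def\<close>)
  with vL have vU: "v \<in> Uad \<Omega> b" unfolding Uad_def in_box_def by simp
  define D where "D = (\<lambda>x. scalar_cost s (p x) (u x) - scalar_cost s (p x) (v x))"
  have D_nonneg: "0 \<le> D x" for x unfolding D_def v_def by auto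
  have D_int: "integrable ?M D"
    unfolding D_def using integrable_scalar_cost[OF p uL] integrable_scalar_cost[OF p vL] by simp
  have "integral\<^sup>L ?M D \<le> 0"
    using minimal[OF vU] integrable_scalar_cost[OF p uL] integrable_scalar_cost[OF p vL]
    by (simp add: D_def)
  moreover have "0 \<le> integral\<^sup>L ?M D" using D_nonneg by (simp add: integral_nonneg_AE)
  ultimately have "integral\<^sup>L ?M D = 0" by linarith
  then have "AE x in ?M. D x = 0" using integral_nonneg_eq_0_iff_AE[of ?M D] D_int D_nonneg by simp
  with Uad_AE_in_box[OF u] show ?thesis
  proof eventually_elim
    case (elim x)
    then have "scalar_cost s (p x) (u x) \<le> scalar_cost s (p x) (a x)"
      unfolding D_def v_def by (auto split: if_splits)
    with elim show ?case
      using scalar_minimizer_scalar_argmin[OF b s, of "p x"] unfolding a_def scalar_minimizer_def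
      by (meson order_trans)
  qed
qed

lemma iht_model_eq_scalar_cost_integral:
  assumes uk: "uk \<in> L2 \<Omega>" and g: "gradf uk \<in> L2 \<Omega>" and v: "v \<in> L2 \<Omega>" and L\<alpha>: "L + \<alpha> > 0"
  defines "p \<equiv> \<lambda>x. (L * uk x - gradf uk x) / (L + \<alpha>)"
  defines "K \<equiv> \<lambda>x. - gradf uk x * uk x + L / 2 * (uk x)\<^sup>2 - (L + \<alpha>) / 2 * (p x)\<^sup>2"
  shows "iht_model \<Omega> f gradf L \<alpha> \<beta> uk v = f uk + (\<integral>x. K x \<partial>lebesgue_on \<Omega>)
           + (L + \<alpha>) * (\<integral>x. scalar_cost (\<beta> / (L + \<alpha>)) (p x) (v x) \<partial>lebesgue_on \<Omega>)"
proof -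
  let ?M = "lebesgue_on \<Omega>"
  have p: "p \<in> L2 \<Omega>"
    using L2_scale[OF L2_diff[OF L2_scale[OF uk, of L] g], of "1 / (L + \<alpha>)"] by (simp add: p_def)
  define I where "I x = (if v x = 0 then 0 else 1 :: real)" for x
  have I_int: "integrable ?M I"
  proof (rule Bochner_Integration.integrable_bound[OF integrable_const_domain[of 1]])
    show "I \<in> borel_measurable ?M" unfolding I_def using v by measurable
  qed (auto simp: I_def)
  have integrand: "gradf uk x * (v x - uk x) + L / 2 * (v x - uk x)\<^sup>2 + \<alpha> / 2 * (v x)\<^sup>2 + \<beta> * I x
      = K x + (L + \<alpha>) * scalar_cost (\<beta> / (L + \<alpha>)) (p x) (v x)" for x
    unfolding K_def scalar_cost_def I_def[symmetric]
    by (rule iht_integrand_identity) (use L\<alpha> in \<open>auto simp: p_def\<close>)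
  have "iht_model \<Omega> f gradf L \<alpha> \<beta> uk v = f uk + ((\<integral>x. gradf uk x * (v x - uk x) \<partial>?M)
       + L / 2 * (\<integral>x. (v x - uk x)\<^sup>2 \<partial>?M) + \<alpha> / 2 * (\<integral>x. (v x)\<^sup>2 \<partial>?M) + \<beta> * (\<integral>x. I x \<partial>?M))"
    unfolding iht_model_def gfun_def L2inner_def L0norm_eq_integral I_def
    using L2norm_square[OF L2_diff[OF v uk]] L2norm_square[OF v] by simp
  also have "\<dots> = f uk + (\<integral>x. gradf uk x * (v x - uk x) + L / 2 * (v x - uk x)\<^sup>2
       + \<alpha> / 2 * (v x)\<^sup>2 + \<beta> * I x \<partial>?M)"
    using L2_integrable_mult[OF g L2_diff[OF v uk]] L2_integrable_square[OF L2_diff[OF v uk]]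
      L2_integrable_square[OF v] I_int by simp
  also have "\<dots> = f uk + (\<integral>x. K x + (L + \<alpha>) * scalar_cost (\<beta> / (L + \<alpha>)) (p x) (v x) \<partial>?M)"
    by (simp only: integrand)
  also have "\<dots> = f uk + (\<integral>x. K x \<partial>?M) + (L + \<alpha>) * (\<integral>x. scalar_cost (\<beta> / (L + \<alpha>)) (p x) (v x) \<partial>?M)"
    using L2_integrable_mult[OF g uk] L2_integrable_square[OF uk] L2_integrable_square[OF p]
      integrable_scalar_cost[OF p v] L\<alpha>
    by (simp add: K_def)
  finally show ?thesis .
qed

lemma iht_step_AE_scalar_minimizer:
  assumes uk: "uk \<in> L2 \<Omega>" and g: "gradf uk \<in> L2 \<Omega>" and u: "u \<in> Uad \<Omega> b"
    and L\<alpha>: "L + \<alpha> > 0" and b: "b > 0" and \<beta>: "\<beta> > 0"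
    and minimal: "\<And>v. v \<in> Uad \<Omega> b \<Longrightarrow>
      iht_model \<Omega> f gradf L \<alpha> \<beta> uk u \<le> iht_model \<Omega> f gradf L \<alpha> \<beta> uk v"
  shows "AE x in lebesgue_on \<Omega>.
           scalar_minimizer (\<beta> / (L + \<alpha>)) b ((L * uk x - gradf uk x) / (L + \<alpha>)) (u x)"
proof (rule AE_scalar_minimizer_if_integral_minimal[OF _ u b])
  show "(\<lambda>x. (L * uk x - gradf uk x) / (L + \<alpha>)) \<in> L2 \<Omega>"
    using L2_scale[OF L2_diff[OF L2_scale[OF uk, of L] g], of "1 / (L + \<alpha>)"] by simp
  show "\<beta> / (L + \<alpha>) > 0" using \<beta> L\<alpha> by simp
  fix v assume v: "v \<in> Uad \<Omega> b"
  let ?cost = "\<lambda>w. \<integral>x. scalar_cost (\<beta> / (L + \<alpha>)) ((L * uk x - gradf uk x) / (L + \<alpha>)) (w x)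
      \<partial>lebesgue_on \<Omega>"
  from minimal[OF v] L\<alpha> show "?cost u \<le> ?cost v"
    unfolding iht_model_eq_scalar_cost_integral[of uk gradf, OF uk g Uad_L2[OF u] L\<alpha>]
      iht_model_eq_scalar_cost_integral[of uk gradf, OF uk g Uad_L2[OF v] L\<alpha>]
    by simp
qed

end

section \<open>Functionals with Lipschitz gradient\<close>

locale L2_smooth_functional = L2_domain \<Omega> for \<Omega> :: "'a::euclidean_space set" +
  fixes f :: "('a \<Rightarrow> real) \<Rightarrow> real" and gradf :: "('a \<Rightarrow> real) \<Rightarrow> ('a \<Rightarrow> real)" and Lf :: real
  assumes gradf_L2: "\<And>v. v \<in> L2 \<Omega> \<Longrightarrow> gradf v \<in> L2 \<Omega>"
    and f_frechet: "\<And>v \<epsilon>. v \<in> L2 \<Omega> \<Longrightarrow> \<epsilon> > 0 \<Longrightarrow>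
                 \<exists>\<delta>>0. \<forall>h \<in> L2 \<Omega>. L2norm \<Omega> h < \<delta> \<longrightarrow>
                   \<bar>f (\<lambda>x. v x + h x) - f v - L2inner \<Omega> (gradf v) h\<bar> \<le> \<epsilon> * L2norm \<Omega> h"
    and gradf_lip: "\<And>v w. v \<in> L2 \<Omega> \<Longrightarrow> w \<in> L2 \<Omega> \<Longrightarrow>
                 L2norm \<Omega> (\<lambda>x. gradf v x - gradf w x) \<le> Lf * L2norm \<Omega> (\<lambda>x. v x - w x)"
begin

lemma has_real_derivative_along_line:
  assumes u: "u \<in> L2 \<Omega>" and h: "h \<in> L2 \<Omega>"
  shows "((\<lambda>t. f (\<lambda>x. u x + t * h x)) has_real_derivative
           L2inner \<Omega> (gradf (\<lambda>x. u x + t0 * h x)) h) (at t0)"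
proof -
  define w where "w = (\<lambda>x. u x + t0 * h x)"
  have w: "w \<in> L2 \<Omega>" unfolding w_def using u h by auto
  define N where "N = L2norm \<Omega> h"
  have N0: "N \<ge> 0" unfolding N_def by (rule L2norm_nonneg)
  define D where "D = L2inner \<Omega> (gradf w) h"
  have shift: "(\<lambda>x. u x + (t0 + \<tau>) * h x) = (\<lambda>x. w x + \<tau> * h x)" for \<tau>
    unfolding w_def by (auto simp: algebra_simps)
  show ?thesis
    unfolding DERIV_def LIM_eq
  proof (intro allI impI)
    fix r :: real assume r: "r > 0"
    define \<epsilon> where "\<epsilon> = r / (2 * (N + 1))"
    have \<epsilon>: "\<epsilon> > 0" unfolding \<epsilon>_def using r N0 by simp
    have \<epsilon>N: "\<epsilon> * N < r"
      unfolding \<epsilon>_def using r N0 by (simp add: field_simps add_nonneg_pos)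
    obtain \<delta> where \<delta>: "\<delta> > 0" and fr: "\<And>k. k \<in> L2 \<Omega> \<Longrightarrow> L2norm \<Omega> k < \<delta> \<Longrightarrow>
        \<bar>f (\<lambda>x. w x + k x) - f w - L2inner \<Omega> (gradf w) k\<bar> \<le> \<epsilon> * L2norm \<Omega> k"
      using f_frechet[OF w \<epsilon>] by blast
    show "\<exists>s>0. \<forall>\<tau>. \<tau> \<noteq> 0 \<and> norm (\<tau> - 0) < s \<longrightarrow>
        norm ((f (\<lambda>x. u x + (t0 + \<tau>) * h x) - f (\<lambda>x. u x + t0 * h x)) / \<tau> -
              L2inner \<Omega> (gradf (\<lambda>x. u x + t0 * h x)) h) < r"
    proof (intro exI[of _ "\<delta> / (N + 1)"] conjI allI impI)
      show "\<delta> / (N + 1) > 0" using \<delta> N0 by simp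
      fix \<tau> :: real assume \<tau>: "\<tau> \<noteq> 0 \<and> norm (\<tau> - 0) < \<delta> / (N + 1)"
      have "\<bar>\<tau>\<bar> * N \<le> \<bar>\<tau>\<bar> * (N + 1)" by (rule mult_left_mono) auto
      also have "\<dots> < \<delta>" using \<tau> N0 by (simp add: field_simps)
      finally have "L2norm \<Omega> (\<lambda>x. \<tau> * h x) < \<delta>" by (simp add: L2norm_scale N_def)
      from fr[OF _ this] h have "\<bar>f (\<lambda>x. w x + \<tau> * h x) - f w - \<tau> * D\<bar> \<le> \<epsilon> * (\<bar>\<tau>\<bar> * N)"
        by (auto simp: L2inner_scale_right L2norm_scale D_def N_def)
      then have "\<bar>(f (\<lambda>x. w x + \<tau> * h x) - f w) / \<tau> - D\<bar> \<le> \<epsilon> * N"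
        using \<tau> by (simp add: field_simps abs_divide)
      with \<epsilon>N show "norm ((f (\<lambda>x. u x + (t0 + \<tau>) * h x) - f (\<lambda>x. u x + t0 * h x)) / \<tau> -
              L2inner \<Omega> (gradf (\<lambda>x. u x + t0 * h x)) h) < r"
        using shift[of \<tau>] by (simp add: w_def[symmetric] D_def)
    qed
  qed
qed

lemma descent_lemma:
  assumes u: "u \<in> L2 \<Omega>" and v: "v \<in> L2 \<Omega>"
  shows "f v \<le> f u + L2inner \<Omega> (gradf u) (\<lambda>x. v x - u x) + Lf / 2 * (L2norm \<Omega> (\<lambda>x. v x - u x))\<^sup>2"
proof -
  define h where "h = (\<lambda>x. v x - u x)"
  have h: "h \<in> L2 \<Omega>" unfolding h_def using u v by auto
  define N where "N = L2norm \<Omega> h"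
  have N0: "N \<ge> 0" unfolding N_def by (rule L2norm_nonneg)
  define G where "G = L2inner \<Omega> (gradf u) h"
  define \<psi> where "\<psi> t = f (\<lambda>x. u x + t * h x) - t * G - Lf / 2 * t\<^sup>2 * N\<^sup>2" for t
  have "\<psi> 1 \<le> \<psi> 0"
  proof (rule DERIV_nonpos_imp_nonincreasing[of 0 1])
    fix t :: real assume t: "0 \<le> t" "t \<le> 1"
    define w where "w = (\<lambda>x. u x + t * h x)"
    have w: "w \<in> L2 \<Omega>" unfolding w_def using u h by auto
    have d: "(\<psi> has_real_derivative L2inner \<Omega> (gradf w) h - G - Lf / 2 * (2 * t) * N\<^sup>2) (at t)"
      unfolding \<psi>_def w_def
      by (auto intro!: derivative_eq_intros has_real_derivative_along_line[OF u h] simp: power2_eq_square)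
    have "L2inner \<Omega> (gradf w) h - G = L2inner \<Omega> (\<lambda>x. gradf w x - gradf u x) h"
      unfolding G_def by (rule L2inner_diff_left) (use w u h gradf_L2 in auto)
    also have "\<dots> \<le> L2norm \<Omega> (\<lambda>x. gradf w x - gradf u x) * N"
      unfolding N_def by (rule L2inner_le_norm_mult) (use w u h gradf_L2 in auto)
    also have "\<dots> \<le> (Lf * L2norm \<Omega> (\<lambda>x. w x - u x)) * N"
      by (rule mult_right_mono[OF gradf_lip[OF w u] N0])
    also have "(\<lambda>x. w x - u x) = (\<lambda>x. t * h x)" unfolding w_def by auto
    also have "(Lf * L2norm \<Omega> (\<lambda>x. t * h x)) * N = Lf / 2 * (2 * t) * N\<^sup>2"
      using t by (simp add: L2norm_scale N_def power2_eq_square)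
    finally show "\<exists>y. (\<psi> has_real_derivative y) (at t) \<and> y \<le> 0" using d by auto
  qed simp
  moreover have "(\<lambda>x. u x + 1 * h x) = v" "(\<lambda>x. u x + 0 * h x) = u" unfolding h_def by auto
  ultimately show ?thesis unfolding \<psi>_def G_def N_def h_def by simp
qed

lemma lipschitz_constant_nonneg:
  assumes "measure (lebesgue_on \<Omega>) \<Omega> > 0"
  shows "Lf \<ge> 0"
proof -
  have "0 \<le> L2norm \<Omega> (\<lambda>x. gradf (\<lambda>x. 1) x - gradf (\<lambda>x. 0) x)" by (rule L2norm_nonneg)
  also have "\<dots> \<le> Lf * L2norm \<Omega> (\<lambda>x. 1 - 0)" using gradf_lip[of "\<lambda>x. 1" "\<lambda>x. 0"] by (simp add: L2I)
  also have "L2norm \<Omega> (\<lambda>x. 1 - 0) = sqrt (measure (lebesgue_on \<Omega>) \<Omega>)" by (simp add: L2norm_def)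
  finally show ?thesis using assms by (simp add: zero_le_mult_iff)
qed

end

section \<open>The IHT iteration\<close>

locale iht_iteration = L2_smooth_functional \<Omega> f gradf Lf
  for \<Omega> :: "'a::euclidean_space set" and f gradf Lf +
  fixes \<alpha> \<beta> :: real and b :: ereal and L :: real and u :: "nat \<Rightarrow> 'a \<Rightarrow> real"
  assumes \<alpha>_pos: "\<alpha> > 0" and \<beta>_pos: "\<beta> > 0" and b_pos: "b > 0"
    and L_gt: "L > Lf" and L_\<alpha>_pos: "L + \<alpha> > 0"
    and f_bdd: "\<exists>m. \<forall>v \<in> L2 \<Omega>. m \<le> f v"
    and iht: "iht_sequence \<Omega> f gradf \<alpha> \<beta> b L u"
begin

lemma iterate_Uad: "u k \<in> Uad \<Omega> b"
  using iht unfolding iht_sequence_def by (cases k) auto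

lemma iterate_L2: "u k \<in> L2 \<Omega>"
  using iterate_Uad by (rule Uad_L2)

lemma iterate_minimal:
  "v \<in> Uad \<Omega> b \<Longrightarrow> iht_model \<Omega> f gradf L \<alpha> \<beta> (u k) (u (Suc k)) \<le> iht_model \<Omega> f gradf L \<alpha> \<beta> (u k) v"
  using iht unfolding iht_sequence_def by blast

lemma iterate_sufficient_decrease:
  "f (u (Suc k)) + gfun \<Omega> \<alpha> \<beta> (u (Suc k)) + (L - Lf) / 2 * (L2norm \<Omega> (\<lambda>x. u (Suc k) x - u k x))\<^sup>2
     \<le> f (u k) + gfun \<Omega> \<alpha> \<beta> (u k)"
proof -
  have "iht_model \<Omega> f gradf L \<alpha> \<beta> (u k) (u (Suc k)) \<le> iht_model \<Omega> f gradf L \<alpha> \<beta> (u k) (u k)"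
    using iterate_minimal[OF iterate_Uad] .
  moreover have "iht_model \<Omega> f gradf L \<alpha> \<beta> (u k) (u k) = f (u k) + gfun \<Omega> \<alpha> \<beta> (u k)"
    unfolding iht_model_def L2inner_def L2norm_def by simp
  moreover have "f (u (Suc k)) \<le> f (u k) + L2inner \<Omega> (gradf (u k)) (\<lambda>x. u (Suc k) x - u k x)
       + Lf / 2 * (L2norm \<Omega> (\<lambda>x. u (Suc k) x - u k x))\<^sup>2"
    by (rule descent_lemma[OF iterate_L2 iterate_L2])
  ultimately show ?thesis unfolding iht_model_def by (simp add: field_simps)
qed

lemma summable_iterate_steps: "summable (\<lambda>k. (L2norm \<Omega> (\<lambda>x. u (Suc k) x - u k x))\<^sup>2)"
proof -
  obtain m where m: "\<And>v. v \<in> L2 \<Omega> \<Longrightarrow> m \<le> f v" using f_bdd by blast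
  show ?thesis
  proof (rule summable_if_sufficient_decrease[where F = "\<lambda>k. f (u k) + gfun \<Omega> \<alpha> \<beta> (u k)"
        and c = "(L - Lf) / 2"])
    show "m \<le> f (u k) + gfun \<Omega> \<alpha> \<beta> (u k)" for k
      using m[OF iterate_L2] \<alpha>_pos \<beta>_pos by (simp add: gfun_def L0norm_def add_increasing2)
  qed (use iterate_sufficient_decrease L_gt in auto)
qed

lemma AE_iterates_scalar_minimizers:
  "AE x in lebesgue_on \<Omega>. \<forall>k. scalar_minimizer (\<beta> / (L + \<alpha>)) b
       ((L * u k x - gradf (u k) x) / (L + \<alpha>)) (u (Suc k) x)"
  unfolding AE_all_countable
  by (intro allI iht_step_AE_scalar_minimizer[OF iterate_L2 gradf_L2[OF iterate_L2] iterate_Uad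
        L_\<alpha>_pos b_pos \<beta>_pos iterate_minimal])

lemma iht_subseq_AE_limit:
  assumes n: "strict_mono n" and g: "g \<in> L2 \<Omega>"
    and grad: "summable (\<lambda>j. (L2norm \<Omega> (\<lambda>x. gradf (u (n j)) x - g x))\<^sup>2)"
  obtains E where "E \<in> L2 \<Omega>" "AE x in lebesgue_on \<Omega>. \<forall>j. \<bar>u (n j) x\<bar> \<le> E x"
    "AE x in lebesgue_on \<Omega>. \<exists>w. (\<lambda>j. u (n j) x) \<longlonglongrightarrow> w \<and>
        scalar_minimizer (\<beta> / (L + \<alpha>)) b ((L * w - g x) / (L + \<alpha>)) w"
proof -
  let ?M = "lebesgue_on \<Omega>" and ?s = "\<beta> / (L + \<alpha>)"
  have s: "?s > 0" using \<beta>_pos L_\<alpha>_pos by simp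
  obtain D where D: "D \<in> L2 \<Omega>" and D_env: "AE x in ?M.
      (\<forall>k. \<bar>u (Suc k) x - u k x\<bar> \<le> D x) \<and> (\<lambda>k. u (Suc k) x - u k x) \<longlonglongrightarrow> 0"
    using L2_square_summable_envelope[of "\<lambda>k x. u (Suc k) x - u k x"] iterate_L2 summable_iterate_steps
    by blast
  obtain H where H: "H \<in> L2 \<Omega>" and H_env: "AE x in ?M.
      (\<forall>j. \<bar>gradf (u (n j)) x - g x\<bar> \<le> H x) \<and> (\<lambda>j. gradf (u (n j)) x - g x) \<longlonglongrightarrow> 0"
    using L2_square_summable_envelope[of "\<lambda>j x. gradf (u (n j)) x - g x"] gradf_L2[OF iterate_L2] g grad
    by blast
  define E where "E x = D x + (\<bar>g x\<bar> + H x + \<bar>L\<bar> * D x) / \<alpha>" for x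
  have "E \<in> L2 \<Omega>"
    using L2_add[OF D L2_scale[OF L2_add[OF L2_add[OF L2_abs[OF g] H] L2_scale[OF D]], of "1 / \<alpha>"]]
    by (simp add: E_def[abs_def])
  moreover have "AE x in ?M. (\<forall>j. \<bar>u (n j) x\<bar> \<le> E x) \<and> (\<exists>w. (\<lambda>j. u (n j) x) \<longlonglongrightarrow> w \<and>
        scalar_minimizer ?s b ((L * w - g x) / (L + \<alpha>)) w)"
    using AE_iterates_scalar_minimizers D_env H_env
  proof eventually_elim
    case (elim x)
    have "\<bar>u (n j) x\<bar> \<le> E x" for j
      unfolding E_def using elim
      by (intro abs_scalar_iht_iterate_le[OF b_pos s \<alpha>_pos L_\<alpha>_pos, of _ "gradf (u (n j)) x"]) auto
    moreover have "(\<lambda>j. gradf (u (n j)) x) \<longlonglongrightarrow> g x"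
      using elim tendsto_add[of _ 0 _ "\<lambda>j. g x" "g x"] by (simp add: LIM_zero_iff)
    then obtain w where "(\<lambda>j. u (n j) x) \<longlonglongrightarrow> w" "scalar_minimizer ?s b ((L * w - g x) / (L + \<alpha>)) w"
      using scalar_iht_subseq_tendsto[OF b_pos s \<alpha>_pos L_\<alpha>_pos, of "\<lambda>k. u k x" "\<lambda>k. gradf (u k) x"] elim n
      by blast
    ultimately show ?case by blast
  qed
  ultimately show ?thesis using that by (auto elim!: AE_mp)
qed

lemma iht_weak_cluster_point:
  assumes compact_grad: "completely_continuous \<Omega> gradf"
    and m: "strict_mono m" and us: "us \<in> L2 \<Omega>" and weak: "weak_conv_L2 \<Omega> (\<lambda>j. u (m j)) us"
  obtains \<tau> E where "strict_mono \<tau>" "E \<in> L2 \<Omega>"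
    "\<And>j. AE x in lebesgue_on \<Omega>. \<bar>u (m (\<tau> j)) x\<bar> \<le> E x"
    "AE x in lebesgue_on \<Omega>. (\<lambda>j. u (m (\<tau> j)) x) \<longlonglongrightarrow> us x"
    "AE x in lebesgue_on \<Omega>. scalar_minimizer (\<beta> / (L + \<alpha>)) b ((L * us x - gradf us x) / (L + \<alpha>)) (us x)"
proof -
  let ?M = "lebesgue_on \<Omega>"
  have "(\<lambda>j. L2norm \<Omega> (\<lambda>x. gradf (u (m j)) x - gradf us x)) \<longlonglongrightarrow> 0"
    by (rule compact_grad[unfolded completely_continuous_def, rule_format, OF _ us weak])
      (simp add: iterate_L2)
  then have "(\<lambda>j. (L2norm \<Omega> (\<lambda>x. gradf (u (m j)) x - gradf us x))\<^sup>2) \<longlonglongrightarrow> 0"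
    using tendsto_power[of _ 0 sequentially 2] by force
  then obtain \<tau> where \<tau>: "strict_mono \<tau>"
    and "summable (\<lambda>j. \<bar>(L2norm \<Omega> (\<lambda>x. gradf (u (m (\<tau> j))) x - gradf us x))\<^sup>2\<bar>)"
    by (rule tendsto_0_imp_summable_subseq)
  then have grad: "summable (\<lambda>j. (L2norm \<Omega> (\<lambda>x. gradf (u (m (\<tau> j))) x - gradf us x))\<^sup>2)" by simp
  have n: "strict_mono (\<lambda>j. m (\<tau> j))" using strict_mono_o[OF m \<tau>] by (simp add: o_def)
  obtain E where E: "E \<in> L2 \<Omega>" and bound: "AE x in ?M. \<forall>j. \<bar>u (m (\<tau> j)) x\<bar> \<le> E x"
    and lim: "AE x in ?M. \<exists>w. (\<lambda>j. u (m (\<tau> j)) x) \<longlonglongrightarrow> w \<and>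
        scalar_minimizer (\<beta> / (L + \<alpha>)) b ((L * w - gradf us x) / (L + \<alpha>)) w"
    using iht_subseq_AE_limit[OF n gradf_L2[OF us] grad] by blast
  have bound_j: "AE x in ?M. \<bar>u (m (\<tau> j)) x\<bar> \<le> E x" for j using bound by eventually_elim blast
  have "AE x in ?M. (\<lambda>j. u (m (\<tau> j)) x) \<longlonglongrightarrow> us x"
  proof (rule weak_limit_AE_tendsto[OF _ us weak_conv_L2_subseq[OF weak \<tau>] _ E bound_j])
    show "AE x in ?M. convergent (\<lambda>j. u (m (\<tau> j)) x)"
      using lim by eventually_elim (auto simp: convergent_def)
  qed (use iterate_L2 in measurable)
  moreover from this lim
  have "AE x in ?M. scalar_minimizer (\<beta> / (L + \<alpha>)) b ((L * us x - gradf us x) / (L + \<alpha>)) (us x)"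
    by eventually_elim (metis LIMSEQ_unique)
  ultimately show ?thesis using that \<tau> E bound_j by blast
qed

lemma iht_weak_subseq_Lq_tendsto:
  assumes compact_grad: "completely_continuous \<Omega> gradf"
    and m: "strict_mono m" and us: "us \<in> L2 \<Omega>" and weak: "weak_conv_L2 \<Omega> (\<lambda>j. u (m j)) us"
    and q: "1 \<le> q" "q < 2"
  shows "(\<lambda>j. \<integral>x. \<bar>u (m j) x - us x\<bar> powr q \<partial>lebesgue_on \<Omega>) \<longlonglongrightarrow> 0"
proof (rule LIMSEQ_if_subseqs_have_LIMSEQ_subseq)
  fix \<sigma> :: "nat \<Rightarrow> nat" assume \<sigma>: "strict_mono \<sigma>"
  have "strict_mono (\<lambda>j. m (\<sigma> j))" using strict_mono_o[OF m \<sigma>] by (simp add: o_def)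
  from iht_weak_cluster_point[OF compact_grad this us weak_conv_L2_subseq[OF weak \<sigma>]]
  obtain \<tau> E where "strict_mono \<tau>" and E: "E \<in> L2 \<Omega>"
    and bound: "\<And>j. AE x in lebesgue_on \<Omega>. \<bar>u (m (\<sigma> (\<tau> j))) x\<bar> \<le> E x"
    and lim: "AE x in lebesgue_on \<Omega>. (\<lambda>j. u (m (\<sigma> (\<tau> j))) x) \<longlonglongrightarrow> us x"
    by blast
  moreover have "(\<lambda>j. \<integral>x. \<bar>u (m (\<sigma> (\<tau> j))) x - us x\<bar> powr q \<partial>lebesgue_on \<Omega>) \<longlonglongrightarrow> 0"
    by (rule Lq_tendsto_if_AE_tendsto_dominated[OF _ us lim E bound q]) (use iterate_L2 in measurable)
  ultimately show "\<exists>\<tau>. strict_mono \<tau> \<and>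
      (\<lambda>j. \<integral>x. \<bar>u (m (\<sigma> (\<tau> j))) x - us x\<bar> powr q \<partial>lebesgue_on \<Omega>) \<longlonglongrightarrow> 0"
    by blast
qed

lemma iht_weak_limit_AE_in_Hsb:
  assumes compact_grad: "completely_continuous \<Omega> gradf"
    and m: "strict_mono m" and us: "us \<in> L2 \<Omega>" and weak: "weak_conv_L2 \<Omega> (\<lambda>j. u (m j)) us"
  shows "AE x in lebesgue_on \<Omega>. us x \<in> Hsb (\<beta> / (L + \<alpha>)) b ((L * us x - gradf us x) / (L + \<alpha>))"
proof -
  have "AE x in lebesgue_on \<Omega>.
      scalar_minimizer (\<beta> / (L + \<alpha>)) b ((L * us x - gradf us x) / (L + \<alpha>)) (us x)"
    by (rule iht_weak_cluster_point[OF compact_grad m us weak])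
  then show ?thesis
    by eventually_elim (rule scalar_minimizer_in_Hsb[OF b_pos]; use \<beta>_pos L_\<alpha>_pos in simp)
qed

end

theorem mainTheorem11:
  fixes \<Omega> :: "'a::euclidean_space set"
    and f :: "('a \<Rightarrow> real) \<Rightarrow> real"
    and gradf :: "('a \<Rightarrow> real) \<Rightarrow> ('a \<Rightarrow> real)"
    and \<alpha> \<beta> L Lf :: real and b :: ereal
    and u :: "nat \<Rightarrow> 'a \<Rightarrow> real" and kn :: "nat \<Rightarrow> nat" and ustar :: "'a \<Rightarrow> real"
  assumes \<Omega>_open: "open \<Omega>" and \<Omega>_bounded: "bounded \<Omega>"
    and \<alpha>_pos: "\<alpha> > 0" and \<beta>_pos: "\<beta> > 0" and b_pos: "b > 0"
    \<comment> \<open>f is a function on L^2(\<Omega>): it respects a.e. equality\<close>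
    and f_wd: "\<And>v w. v \<in> L2 \<Omega> \<Longrightarrow> w \<in> L2 \<Omega> \<Longrightarrow>
                 (AE x in lebesgue_on \<Omega>. v x = w x) \<Longrightarrow> f v = f w"
    and gradf_wd: "\<And>v w. v \<in> L2 \<Omega> \<Longrightarrow> w \<in> L2 \<Omega> \<Longrightarrow>
                 (AE x in lebesgue_on \<Omega>. v x = w x) \<Longrightarrow>
                 (AE x in lebesgue_on \<Omega>. gradf v x = gradf w x)"
    and f_wlsc: "\<And>w w0. (\<And>n. w n \<in> L2 \<Omega>) \<Longrightarrow> w0 \<in> L2 \<Omega> \<Longrightarrow> weak_conv_L2 \<Omega> w w0 \<Longrightarrow>
                 ereal (f w0) \<le> liminf (\<lambda>n. ereal (f (w n)))"
    and f_bdd: "\<exists>m. \<forall>v \<in> L2 \<Omega>. m \<le> f v"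
    and gradf_L2: "\<And>v. v \<in> L2 \<Omega> \<Longrightarrow> gradf v \<in> L2 \<Omega>"
    and f_frechet: "\<And>v \<epsilon>. v \<in> L2 \<Omega> \<Longrightarrow> \<epsilon> > 0 \<Longrightarrow>
                 \<exists>\<delta>>0. \<forall>h \<in> L2 \<Omega>. L2norm \<Omega> h < \<delta> \<longrightarrow>
                   \<bar>f (\<lambda>x. v x + h x) - f v - L2inner \<Omega> (gradf v) h\<bar> \<le> \<epsilon> * L2norm \<Omega> h"
    and gradf_lip: "\<And>v w. v \<in> L2 \<Omega> \<Longrightarrow> w \<in> L2 \<Omega> \<Longrightarrow>
                 L2norm \<Omega> (\<lambda>x. gradf v x - gradf w x) \<le> Lf * L2norm \<Omega> (\<lambda>x. v x - w x)"
    and L_gt: "L > Lf"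
    and gradf_cc: "\<And>w w0. (\<And>n. w n \<in> L2 \<Omega>) \<Longrightarrow> w0 \<in> L2 \<Omega> \<Longrightarrow> weak_conv_L2 \<Omega> w w0 \<Longrightarrow>
                 (\<lambda>n. L2norm \<Omega> (\<lambda>x. gradf (w n) x - gradf w0 x)) \<longlonglongrightarrow> 0"
    and iht: "iht_sequence \<Omega> f gradf \<alpha> \<beta> b L u"
    and kn_mono: "strict_mono kn"
    and ustar_L2: "ustar \<in> L2 \<Omega>"
    and weak: "weak_conv_L2 \<Omega> (\<lambda>n. u (kn n)) ustar"
  shows "(\<forall>q::real. 1 \<le> q \<and> q < 2 \<longrightarrow>
            (\<lambda>n. \<integral>x. \<bar>u (kn n) x - ustar x\<bar> powr q \<partial>lebesgue_on \<Omega>) \<longlonglongrightarrow> 0)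
       \<and> (AE x in lebesgue_on \<Omega>.
            ustar x \<in> Hsb (\<beta> / (L + \<alpha>)) b ((L * ustar x - gradf ustar x) / (L + \<alpha>)))"
proof -
  interpret L2_domain \<Omega> using lmeasurable_open[OF \<Omega>_bounded \<Omega>_open] by unfold_locales
  show ?thesis
  proof (cases "measure (lebesgue_on \<Omega>) \<Omega> = 0")
    case True
    then have "(\<integral>x. \<bar>u (kn n) x - ustar x\<bar> powr q \<partial>lebesgue_on \<Omega>) = 0" for n q
      by (intro integral_eq_zero_AE AE_if_null_domain)
    then show ?thesis using AE_if_null_domain[OF True] by simp
  next
    case False
    interpret L2_smooth_functional \<Omega> f gradf Lf
      using gradf_L2 f_frechet gradf_lip by unfold_locales
    \<comment> \<open>only a domain of positive measure forces \<open>Lf \<ge> 0\<close>, hence \<open>L + \<alpha> > 0\<close>\<close>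
    have "Lf \<ge> 0"
      using False measure_nonneg[of "lebesgue_on \<Omega>" \<Omega>] lipschitz_constant_nonneg by linarith
    interpret iht_iteration \<Omega> f gradf Lf \<alpha> \<beta> b L u
      using \<alpha>_pos \<beta>_pos b_pos L_gt \<open>Lf \<ge> 0\<close> f_bdd iht by unfold_locales auto
    have cc: "completely_continuous \<Omega> gradf"
      unfolding completely_continuous_def by (intro allI impI gradf_cc) auto
    show ?thesis
      using iht_weak_subseq_Lq_tendsto[OF cc kn_mono ustar_L2 weak]
        iht_weak_limit_AE_in_Hsb[OF cc kn_mono ustar_L2 weak] by blast
  qed
qed

end
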